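(* Let $n\ge1$, $T\ge2$, $G=([T],\mathcal{E})$ a connected undirected graph with incidence matrix $D$ (any orientation), Laplacian $L=D^\top D$ with eigenvalues $\lambda_1\ge\cdots\ge\lambda_{T-1}>\lambda_T=0$, and $M=D\otimes I_n$. Let $C_t\in\mathbb{R}^{m_t\times n}$, $C=\mathrm{blockdiag}(C_1,\dots,C_T)$, $O_T^\top O_T=\sum_t C_t^\top C_t$ with $\lambda_{\min}(O_T^\top O_T)>0$, and let $x\in\mathbb{R}^{nT}$ satisfy $\|Mx\|_2^2\le S_T$. Let $b_1,b_2,b_3>0$ satisfy $\lambda_{T-1}\ge b_1$, $\lambda_{\min}(O_T^\top O_T)/T\ge b_2$, $2\|C\|_2\lambda_{\max}^{1/2}(O_T^\top O_T)/\sqrt T\le b_3$, and for $\mu>0$ define $\overline{\lambda}(\mu)=\max\{\overline{\lambda'}(\mu),\lambda_{\min}(C^\top C)\}$ with $$\overline{\lambda'}(\mu)=\begin{cases}\dfrac{b_2^2}{2(b_2^2+b_3^2)}\mu b_1, & \text{if } \mu b_1<b_2+\dfrac{b_3^2-b_2^2}{2b_2},\\[2mm] \dfrac14\Big(1-\dfrac{\mu b_1-b_2}{\sqrt{b_3^2+(\mu b_1-b_2)^2}}\Big)\mu b_1+\dfrac{b_2}{4}+\dfrac{b_2(\mu b_1-b_2)-b_3^2}{4\sqrt{b_3^2+(\mu b_1-b_2)^2}}, & \text{otherwise.}\end{cases}$$ Then for any $\mu>0$, $$E_1:=2\mu^2\big\|(\mu M^\top M+C^\top C)^{-1}(M^\top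 M)x\big\|_2^2\le\frac{4\mu}{\overline{\lambda}(\mu)}S_T.$$
   Context: $\otimes$ is the Kronecker product; $\lambda_{\min},\lambda_{\max}$ denote smallest/largest eigenvalues; $\|\cdot\|_2$ is the Euclidean norm for vectors and spectral norm for matrices. *)

theory Defs
  imports "Jordan_Normal_Form.Matrix" "Jordan_Normal_Form.Char_Poly"
          "HOL-Library.Multiset"
begin

definition vnorm :: "real vec \<Rightarrow> real" where
  "vnorm v = sqrt (v \<bullet> v)"

definition spec_norm :: "real mat \<Rightarrow> real" where
  "spec_norm A = Sup {vnorm (A *\<^sub>v v) | v. v \<in> carrier_vec (dim_col A) \<and> vnorm v = 1}"

definition minv :: "real mat \<Rightarrow> real mat" where
  "minv A = (SOME B. inverts_mat A B \<and> inverts_mat B A)"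

definition lam_min :: "real mat \<Rightarrow> real" where
  "lam_min A = Min {k. eigenvalue A k}"
definition lam_max :: "real mat \<Rightarrow> real" where
  "lam_max A = Max {k. eigenvalue A k}"

definition eig_mset :: "real mat \<Rightarrow> real multiset" where
  "eig_mset A = (\<Sum>k\<in>{k. poly (char_poly A) k = 0}. replicate_mset (order k (char_poly A)) k)"

(* i-th eigenvalue in non-increasing order, 1-based: lambda_1 >= ... >= lambda_T *)
definition eig_desc :: "real mat \<Rightarrow> nat \<Rightarrow> real" where
  "eig_desc A i = rev (sorted_list_of_multiset (eig_mset A)) ! (i - 1)"

definition kron :: "real mat \<Rightarrow> real mat \<Rightarrow> real mat" where
  "kron A B = mat (dim_row A * dim_row B) (dim_col A * dim_col B)
     (\<lambda>(i,j). A $$ (i div dim_row B, j div dim_col B) * B $$ (i mod dim_row B, j mod dim_col B))"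

fun blockdiag :: "real mat list \<Rightarrow> real mat" where
  "blockdiag [] = 0\<^sub>m 0 0"
| "blockdiag (A # As) = (let B = blockdiag As in
     four_block_mat A (0\<^sub>m (dim_row A) (dim_col B)) (0\<^sub>m (dim_row B) (dim_col A)) B)"

(* simple undirected graph on vertices {0..<T}, given by a list of oriented edges *)
definition simple_graph :: "nat \<Rightarrow> (nat \<times> nat) list \<Rightarrow> bool" where
  "simple_graph T es \<longleftrightarrow> (\<forall>(i,j)\<in>set es. i < T \<and> j < T \<and> i \<noteq> j)
     \<and> distinct (map (\<lambda>(i,j). {i,j}) es)"

definition connected_graph :: "nat \<Rightarrow> (nat \<times> nat) list \<Rightarrow> bool" where
  "connected_graph T es \<longleftrightarrow> simple_graph T es \<and>
     (\<forall>u<T. \<forall>v<T. (u,v) \<in> ({(i,j). (i,j) \<in> set es \<or> (j,i) \<in> set es})\<^sup>*)"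

definition incidence :: "nat \<Rightarrow> (nat \<times> nat) list \<Rightarrow> real mat" where
  "incidence T es = mat (length es) T
     (\<lambda>(k,v). if v = fst (es ! k) then 1 else if v = snd (es ! k) then -1 else 0)"

definition lam_bar' :: "real \<Rightarrow> real \<Rightarrow> real \<Rightarrow> real \<Rightarrow> real" where
  "lam_bar' b1 b2 b3 \<mu> =
    (if \<mu> * b1 < b2 + (b3^2 - b2^2) / (2 * b2)
     then b2^2 / (2 * (b2^2 + b3^2)) * \<mu> * b1
     else 1/4 * (1 - (\<mu> * b1 - b2) / sqrt (b3^2 + (\<mu> * b1 - b2)^2)) * \<mu> * b1 + b2 / 4
          + (b2 * (\<mu> * b1 - b2) - b3^2) / (4 * sqrt (b3^2 + (\<mu> * b1 - b2)^2)))"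

end

theory Submission
  imports Defs
begin

(* Write P = mu M^T M + C^T C and z = P^-1 M^T M x. Then z^T P z = (M z)^T (M x) and
   mu |M z|^2 <= z^T P z, so Cauchy-Schwarz gives z^T P z <= |M x|^2 / mu, and the claim follows
   from the coercivity P >= (lambda(mu) / 2) I. For lambda_min(C^T C) this is immediate. For
   lam_bar'(mu), split y = p + w, where p repeats the block mean of y in every block and the
   coordinate slices of w sum to zero. Since M = D (x) I_n annihilates p, |M y|^2 >= lambda_{T-1} |w|^2
   by the variational characterisation of the second smallest Laplacian eigenvalue; on the
   other hand |C p|^2 >= b2 |p|^2 and 2 |<C p, C w>| <= b3 |p| |w| by the eigenvalue bounds on
   O_T^T O_T. The resulting two-variable quadratic inequality in (|p|, |w|) is bounded below by
   lam_bar'(mu) / 2 (|p|^2 + |w|^2) in each of the two branches of its definition. *)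

section \<open>Cauchy--Schwarz inequalities and quadratic forms\<close>

lemma quadratic_nonneg_imp_discriminant:
  fixes a b c :: real
  assumes a: "a \<ge> 0" and nonneg: "\<And>t. 0 \<le> c + 2 * b * t + a * t^2"
  shows "b^2 \<le> a * c"
proof (cases "a = 0")
  case True
  show ?thesis
  proof (rule ccontr)
    assume "\<not> ?thesis"
    hence b: "b \<noteq> 0" using True by auto
    have "0 \<le> c + 2 * b * (-(c + 1) / (2 * b)) + a * (-(c + 1) / (2 * b))^2" by (rule nonneg)
    also have "\<dots> = -1" using b True by (simp add: field_simps)
    finally show False by simp
  qed
next
  case False
  hence a: "a > 0" using a by auto
  have "0 \<le> c + 2 * b * (-b / a) + a * (-b / a)^2" by (rule nonneg)
  also have "\<dots> = c - b^2 / a" using a by (simp add: field_simps power2_eq_square)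
  finally show ?thesis using a by (simp add: field_simps mult.commute)
qed

lemma Cauchy_Schwarz_sum:
  fixes f g :: "'a \<Rightarrow> real"
  shows "(\<Sum>j\<in>J. f j * g j)^2 \<le> (\<Sum>j\<in>J. (f j)^2) * (\<Sum>j\<in>J. (g j)^2)"
proof (rule quadratic_nonneg_imp_discriminant)
  show "0 \<le> (\<Sum>j\<in>J. (f j)^2)" by (auto intro: sum_nonneg)
  fix t
  have "0 \<le> (\<Sum>j\<in>J. (g j + t * f j)^2)" by (auto intro: sum_nonneg)
  also have "\<dots> = (\<Sum>j\<in>J. (g j)^2) + 2 * (\<Sum>j\<in>J. f j * g j) * t + (\<Sum>j\<in>J. (f j)^2) * t^2"
    by (simp add: power2_eq_square algebra_simps sum.distrib sum_distrib_left sum_distrib_right)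
  finally show "0 \<le> (\<Sum>j\<in>J. (g j)^2) + 2 * (\<Sum>j\<in>J. f j * g j) * t + (\<Sum>j\<in>J. (f j)^2) * t^2" .
qed

lemma scalar_prod_eq_sum: "w \<in> carrier_vec n \<Longrightarrow> v \<bullet> w = (\<Sum>i<n. v $ i * w $ i)"
  unfolding scalar_prod_def by (auto intro: sum.cong)

lemma mult_mat_vec_index_sum:
  "A \<in> carrier_mat r c \<Longrightarrow> i < r \<Longrightarrow> v \<in> carrier_vec c \<Longrightarrow>
   (A *\<^sub>v v) $ i = (\<Sum>j<c. A $$ (i, j) * v $ j)"
  by (simp add: scalar_prod_eq_sum[of _ c] row_def)

lemma scalar_prod_self_nonneg: "0 \<le> (v :: real vec) \<bullet> v"
  using conjugate_square_ge_0_vec[of v] by simp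

lemma scalar_prod_self_eq_0_iff: "v \<in> carrier_vec n \<Longrightarrow> (v \<bullet> v = 0) = (v = (0\<^sub>v n :: real vec))"
  using conjugate_square_eq_0_vec[of v n] by simp

lemma scalar_prod_self_pos: "v \<in> carrier_vec n \<Longrightarrow> v \<noteq> 0\<^sub>v n \<Longrightarrow> 0 < (v :: real vec) \<bullet> v"
  using conjugate_square_greater_0_vec[of v n] by simp

lemma Cauchy_Schwarz_scalar_prod:
  fixes v w :: "real vec"
  assumes "v \<in> carrier_vec n" "w \<in> carrier_vec n"
  shows "(v \<bullet> w)^2 \<le> (v \<bullet> v) * (w \<bullet> w)"
  using Cauchy_Schwarz_sum[of "\<lambda>i. v $ i" "\<lambda>i. w $ i" "{..<n}"] assms
  by (simp add: scalar_prod_eq_sum[of _ n] power2_eq_square)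

lemma vnorm_square: "(vnorm v)^2 = (v :: real vec) \<bullet> v"
  unfolding vnorm_def using scalar_prod_self_nonneg[of v] by simp

lemma vnorm_nonneg: "vnorm v \<ge> 0"
  unfolding vnorm_def using scalar_prod_self_nonneg[of v] by simp

lemma abs_scalar_prod_le_vnorm:
  fixes u v :: "real vec"
  assumes "u \<in> carrier_vec n" "v \<in> carrier_vec n"
  shows "\<bar>u \<bullet> v\<bar> \<le> vnorm u * vnorm v"
proof -
  have "sqrt ((u \<bullet> v)^2) \<le> sqrt ((u \<bullet> u) * (v \<bullet> v))"
    using Cauchy_Schwarz_scalar_prod[OF assms] by (rule real_sqrt_le_mono)
  thus ?thesis unfolding vnorm_def by (simp add: real_sqrt_mult)
qed

lemma mult_mat_zero_vec: "A \<in> carrier_mat r c \<Longrightarrow> (A :: real mat) *\<^sub>v 0\<^sub>v c = 0\<^sub>v r"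
  by (intro eq_vecI) (auto simp: scalar_prod_eq_sum[of _ c])

lemma smult_mat_mult_vec:
  fixes A :: "real mat"
  assumes A: "A \<in> carrier_mat r c" and v: "v \<in> carrier_vec c"
  shows "(k \<cdot>\<^sub>m A) *\<^sub>v v = k \<cdot>\<^sub>v (A *\<^sub>v v)"
  using A v by (intro eq_vecI) (auto simp: mult_mat_vec_index_sum[of _ r c] sum_distrib_left ac_simps)

lemma symmetric_scalar_prod_mult_vec:
  fixes A :: "real mat"
  assumes A: "A \<in> carrier_mat n n" and sym: "transpose_mat A = A"
    and x: "x \<in> carrier_vec n" and y: "y \<in> carrier_vec n"
  shows "x \<bullet> (A *\<^sub>v y) = y \<bullet> (A *\<^sub>v x)"
proof -
  have "x \<bullet> (A *\<^sub>v y) = (transpose_mat A *\<^sub>v x) \<bullet> y"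
    by (rule transpose_vec_mult_scalar[OF A y x, symmetric])
  also have "\<dots> = y \<bullet> (A *\<^sub>v x)"
    using sym A x y by (simp add: comm_scalar_prod[of _ n])
  finally show ?thesis .
qed

lemma gram_quadratic_form:
  fixes D :: "real mat"
  assumes D: "D \<in> carrier_mat r c" and y: "y \<in> carrier_vec c"
  shows "y \<bullet> ((transpose_mat D * D) *\<^sub>v y) = (D *\<^sub>v y) \<bullet> (D *\<^sub>v y)"
proof -
  have "y \<bullet> ((transpose_mat D * D) *\<^sub>v y) = (transpose_mat D *\<^sub>v (D *\<^sub>v y)) \<bullet> y"
    using D y by (simp add: comm_scalar_prod[of _ c])
  also have "\<dots> = (D *\<^sub>v y) \<bullet> (D *\<^sub>v y)"
    by (rule transpose_vec_mult_scalar[OF D y]) (use D y in simp)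
  finally show ?thesis .
qed

lemma transpose_gram: "transpose_mat (transpose_mat D * D) = transpose_mat D * (D :: real mat)"
  by (simp add: transpose_mult[of "transpose_mat D" "dim_col D" "dim_row D" D "dim_col D"])

lemma psd_Cauchy_Schwarz:
  fixes B :: "real mat"
  assumes B: "B \<in> carrier_mat n n" and sym: "transpose_mat B = B"
    and x: "x \<in> carrier_vec n" and y: "y \<in> carrier_vec n"
    and psd: "\<And>t. 0 \<le> (y + t \<cdot>\<^sub>v x) \<bullet> (B *\<^sub>v (y + t \<cdot>\<^sub>v x))"
    and psd_x: "0 \<le> x \<bullet> (B *\<^sub>v x)"
  shows "(y \<bullet> (B *\<^sub>v x))^2 \<le> (x \<bullet> (B *\<^sub>v x)) * (y \<bullet> (B *\<^sub>v y))"
proof (rule quadratic_nonneg_imp_discriminant[OF psd_x])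
  fix t
  have "(y + t \<cdot>\<^sub>v x) \<bullet> (B *\<^sub>v (y + t \<cdot>\<^sub>v x))
      = y \<bullet> (B *\<^sub>v y) + t * (y \<bullet> (B *\<^sub>v x)) + t * (x \<bullet> (B *\<^sub>v y)) + t * t * (x \<bullet> (B *\<^sub>v x))"
    using B x y by (simp add: mult_add_distrib_mat_vec[OF B] mult_mat_vec[OF B]
        add_scalar_prod_distrib[of _ n] scalar_prod_add_distrib[of _ n] algebra_simps)
  also have "x \<bullet> (B *\<^sub>v y) = y \<bullet> (B *\<^sub>v x)" by (rule symmetric_scalar_prod_mult_vec[OF B sym x y])
  finally show "0 \<le> y \<bullet> (B *\<^sub>v y) + 2 * (y \<bullet> (B *\<^sub>v x)) * t + (x \<bullet> (B *\<^sub>v x)) * t^2"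
    using psd[of t] by (simp add: power2_eq_square algebra_simps)
qed

definition frobenius_sq :: "real mat \<Rightarrow> real" where
  "frobenius_sq A = (\<Sum>i<dim_row A. \<Sum>j<dim_col A. (A $$ (i, j))^2)"

lemma frobenius_sq_nonneg: "0 \<le> frobenius_sq A"
  unfolding frobenius_sq_def by (auto intro!: sum_nonneg)

lemma mult_mat_vec_square_le_frobenius:
  fixes A :: "real mat"
  assumes A: "A \<in> carrier_mat r c" and v: "v \<in> carrier_vec c"
  shows "(A *\<^sub>v v) \<bullet> (A *\<^sub>v v) \<le> frobenius_sq A * (v \<bullet> v)"
proof -
  have "(A *\<^sub>v v) \<bullet> (A *\<^sub>v v) = (\<Sum>i<r. ((A *\<^sub>v v) $ i)^2)"
    using A v by (simp add: scalar_prod_eq_sum[of _ r] power2_eq_square)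
  also have "\<dots> = (\<Sum>i<r. (\<Sum>j<c. A $$ (i, j) * v $ j)^2)"
    using mult_mat_vec_index_sum[OF A _ v] by simp
  also have "\<dots> \<le> (\<Sum>i<r. (\<Sum>j<c. (A $$ (i, j))^2) * (\<Sum>j<c. (v $ j)^2))"
    by (intro sum_mono Cauchy_Schwarz_sum)
  also have "\<dots> = frobenius_sq A * (v \<bullet> v)"
    using A v by (simp add: frobenius_sq_def sum_distrib_right scalar_prod_eq_sum[of _ c] power2_eq_square)
  finally show ?thesis .
qed

lemma abs_quadratic_form_le_frobenius:
  fixes A :: "real mat"
  assumes A: "A \<in> carrier_mat n n" and v: "v \<in> carrier_vec n"
  shows "\<bar>v \<bullet> (A *\<^sub>v v)\<bar> \<le> sqrt (frobenius_sq A) * (v \<bullet> v)"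
proof -
  have "(v \<bullet> (A *\<^sub>v v))^2 \<le> (v \<bullet> v) * ((A *\<^sub>v v) \<bullet> (A *\<^sub>v v))"
    using A v by (intro Cauchy_Schwarz_scalar_prod[of _ n]) auto
  also have "\<dots> \<le> (v \<bullet> v) * (frobenius_sq A * (v \<bullet> v))"
    by (intro mult_left_mono mult_mat_vec_square_le_frobenius[OF A v] scalar_prod_self_nonneg)
  also have "\<dots> = (sqrt (frobenius_sq A) * (v \<bullet> v))^2"
    using frobenius_sq_nonneg[of A] by (simp add: power2_eq_square)
  finally show ?thesis
    using frobenius_sq_nonneg[of A] scalar_prod_self_nonneg[of v] by (simp add: power2_le_iff_abs_le)
qed

lemma spec_norm_bound:
  fixes A :: "real mat"
  assumes A: "A \<in> carrier_mat r c" and v: "v \<in> carrier_vec c"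
  shows "vnorm (A *\<^sub>v v) \<le> spec_norm A * vnorm v"
proof (cases "v = 0\<^sub>v c")
  case True
  thus ?thesis using A by (simp add: vnorm_def mult_mat_zero_vec)
next
  case False
  define S where "S = {vnorm (A *\<^sub>v v) | v. v \<in> carrier_vec (dim_col A) \<and> vnorm v = 1}"
  have bdd: "bdd_above S"
  proof
    fix s assume "s \<in> S"
    then obtain u where u: "u \<in> carrier_vec c" "vnorm u = 1" and s: "s = vnorm (A *\<^sub>v u)"
      unfolding S_def using A by auto
    have "(A *\<^sub>v u) \<bullet> (A *\<^sub>v u) \<le> frobenius_sq A"
      using mult_mat_vec_square_le_frobenius[OF A u(1)] u(2) vnorm_square[of u] by simp
    thus "s \<le> sqrt (frobenius_sq A)" unfolding s vnorm_def by simp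
  qed
  have nv: "vnorm v > 0"
    unfolding vnorm_def using scalar_prod_self_pos[OF v False] by simp
  define u where "u = (1 / vnorm v) \<cdot>\<^sub>v v"
  have u: "u \<in> carrier_vec c" unfolding u_def using v by simp
  have "vnorm u = 1"
    using nv v vnorm_square[of v] unfolding u_def vnorm_def by (simp add: power2_eq_square)
  hence "vnorm (A *\<^sub>v u) \<le> spec_norm A"
    unfolding spec_norm_def S_def[symmetric] using u A by (intro cSup_upper[OF _ bdd]) (auto simp: S_def)
  moreover have "vnorm (A *\<^sub>v u) = vnorm (A *\<^sub>v v) / vnorm v"
    using A v nv unfolding u_def mult_mat_vec[OF A v] vnorm_def by (simp add: real_sqrt_divide)
  ultimately show ?thesis using nv by (simp add: field_simps)
qed

lemma injective_mat_invertible: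
  fixes A :: "real mat"
  assumes A: "A \<in> carrier_mat n n"
    and inj: "\<And>v. v \<in> carrier_vec n \<Longrightarrow> A *\<^sub>v v = 0\<^sub>v n \<Longrightarrow> v = 0\<^sub>v n"
  obtains B where "B \<in> carrier_mat n n" "B * A = 1\<^sub>m n" "A * B = 1\<^sub>m n"
proof -
  have "det A \<noteq> 0" using det_0_iff_vec_prod_zero[OF A] inj by auto
  from det_non_zero_imp_unit[OF A this] show ?thesis
    using that unfolding Units_def by (auto simp: ring_mat_simps)
qed

lemma minv_right_inverse:
  fixes P :: "real mat"
  assumes P: "P \<in> carrier_mat n n" and B: "B \<in> carrier_mat n n"
    and "B * P = 1\<^sub>m n" "P * B = 1\<^sub>m n"
  shows "minv P \<in> carrier_mat n n" "P * minv P = 1\<^sub>m n"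
proof -
  have "inverts_mat P B \<and> inverts_mat B P" unfolding inverts_mat_def using assms by auto
  hence "inverts_mat P (minv P) \<and> inverts_mat (minv P) P" unfolding minv_def by (rule someI)
  hence right: "P * minv P = 1\<^sub>m n" and left: "minv P * P = 1\<^sub>m (dim_row (minv P))"
    unfolding inverts_mat_def using P by auto
  have "dim_col (minv P) = n" using arg_cong[OF right, of dim_col] by simp
  moreover have "dim_row (minv P) = n" using arg_cong[OF left, of dim_col] P by simp
  ultimately show "minv P \<in> carrier_mat n n" by auto
  show "P * minv P = 1\<^sub>m n" by (rule right)
qed

section \<open>Variational characterisation of eigenvalues\<close>

lemma outer_prod_mult_vec:
  fixes u y :: "real vec"
  assumes u: "u \<in> carrier_vec n" and y: "y \<in> carrier_vec n"
  shows "mat n n (\<lambda>(i, j). u $ i * u $ j) *\<^sub>v y = (u \<bullet> y) \<cdot>\<^sub>v u"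
  using u y
  by (intro eq_vecI) (auto simp: mult_mat_vec_index_sum[of _ n n] scalar_prod_eq_sum[of _ n]
      sum_distrib_left sum_distrib_right ac_simps)

lemma scalar_prod_eigenvector_mult_vec:
  fixes A :: "real mat"
  assumes A: "A \<in> carrier_mat n n" and sym: "transpose_mat A = A"
    and u: "u \<in> carrier_vec n" and Au: "A *\<^sub>v u = k \<cdot>\<^sub>v u" and x: "x \<in> carrier_vec n"
  shows "u \<bullet> (A *\<^sub>v x) = k * (u \<bullet> x)"
proof -
  have "u \<bullet> (A *\<^sub>v x) = x \<bullet> (A *\<^sub>v u)" by (rule symmetric_scalar_prod_mult_vec[OF A sym u x])
  also have "\<dots> = k * (u \<bullet> x)" using Au x u by (simp add: comm_scalar_prod[of _ n])
  finally show ?thesis .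
qed

lemma psd_on_complement_square_le:
  fixes B :: "real mat"
  assumes B: "B \<in> carrier_mat n n" and sym: "transpose_mat B = B" and u: "u \<in> carrier_vec n"
    and psd: "\<And>y. y \<in> carrier_vec n \<Longrightarrow> u \<bullet> y = 0 \<Longrightarrow> 0 \<le> y \<bullet> (B *\<^sub>v y)"
    and x: "x \<in> carrier_vec n" "u \<bullet> x = 0" and uBx: "u \<bullet> (B *\<^sub>v x) = 0"
  shows "(B *\<^sub>v x) \<bullet> (B *\<^sub>v x) \<le> sqrt (frobenius_sq B) * (x \<bullet> (B *\<^sub>v x))"
proof -
  let ?K = "sqrt (frobenius_sq B)"
  have Bx: "B *\<^sub>v x \<in> carrier_vec n" using B x by simp
  have psd_x: "0 \<le> x \<bullet> (B *\<^sub>v x)" by (rule psd[OF x])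
  have cs: "((B *\<^sub>v x) \<bullet> (B *\<^sub>v x))^2 \<le> (x \<bullet> (B *\<^sub>v x)) * ((B *\<^sub>v x) \<bullet> (B *\<^sub>v (B *\<^sub>v x)))"
  proof (rule psd_Cauchy_Schwarz[OF B sym x(1) Bx _ psd_x])
    fix t
    show "0 \<le> (B *\<^sub>v x + t \<cdot>\<^sub>v x) \<bullet> (B *\<^sub>v (B *\<^sub>v x + t \<cdot>\<^sub>v x))"
      by (rule psd) (use Bx x u uBx in \<open>auto simp: scalar_prod_add_distrib[of _ n]\<close>)
  qed
  have "(B *\<^sub>v x) \<bullet> (B *\<^sub>v (B *\<^sub>v x)) \<le> ?K * ((B *\<^sub>v x) \<bullet> (B *\<^sub>v x))"
    using abs_quadratic_form_le_frobenius[OF B Bx] by simp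
  hence "((B *\<^sub>v x) \<bullet> (B *\<^sub>v x))^2 \<le> (x \<bullet> (B *\<^sub>v x)) * (?K * ((B *\<^sub>v x) \<bullet> (B *\<^sub>v x)))"
    using cs psd_x by (meson mult_left_mono order_trans)
  hence "(B *\<^sub>v x) \<bullet> (B *\<^sub>v x) * ((B *\<^sub>v x) \<bullet> (B *\<^sub>v x))
      \<le> (?K * (x \<bullet> (B *\<^sub>v x))) * ((B *\<^sub>v x) \<bullet> (B *\<^sub>v x))"
    by (simp add: power2_eq_square ac_simps)
  thus ?thesis
    using scalar_prod_self_nonneg[of "B *\<^sub>v x"] frobenius_sq_nonneg[of B] psd_x
    by (cases "(B *\<^sub>v x) \<bullet> (B *\<^sub>v x) = 0") auto
qed

text \<open>Adding a suitable multiple of \<open>u u\<^sup>T\<close> makes the operator injective on the whole space;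
  the inverse of that perturbation bounds it from below on the complement of \<open>u\<close>.\<close>

lemma injective_on_complement_bounded_below:
  fixes B :: "real mat"
  assumes B: "B \<in> carrier_mat n n" and sym: "transpose_mat B = B"
    and u: "u \<in> carrier_vec n" and Bu: "B *\<^sub>v u = k \<cdot>\<^sub>v u"
    and inj: "\<And>x. x \<in> carrier_vec n \<Longrightarrow> u \<bullet> x = 0 \<Longrightarrow> B *\<^sub>v x = 0\<^sub>v n \<Longrightarrow> x = 0\<^sub>v n"
  obtains F where "F \<ge> 0"
    and "\<And>x. x \<in> carrier_vec n \<Longrightarrow> u \<bullet> x = 0 \<Longrightarrow> x \<bullet> x \<le> F * ((B *\<^sub>v x) \<bullet> (B *\<^sub>v x))"
proof -
  define c where "c = (1 - k) / (u \<bullet> u)"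
  define B' where "B' = B + c \<cdot>\<^sub>m mat n n (\<lambda>(i, j). u $ i * u $ j)"
  have B': "B' \<in> carrier_mat n n" unfolding B'_def using B by simp
  have B'x: "B' *\<^sub>v x = B *\<^sub>v x + (c * (u \<bullet> x)) \<cdot>\<^sub>v u" if x: "x \<in> carrier_vec n" for x
    unfolding B'_def using B u x
    by (simp add: add_mult_distrib_mat_vec[of _ n n] smult_mat_mult_vec[of _ n n] outer_prod_mult_vec
        smult_smult_assoc)
  have B'_eq: "B' *\<^sub>v x = B *\<^sub>v x" if x: "x \<in> carrier_vec n" "u \<bullet> x = 0" for x
    using B'x[OF x(1)] x B u by (auto intro!: eq_vecI)
  have uB'x: "u \<bullet> (B' *\<^sub>v x) = u \<bullet> x" if x: "x \<in> carrier_vec n" for x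
  proof (cases "u = 0\<^sub>v n")
    case True
    thus ?thesis using x B' by simp
  next
    case False
    have uu: "u \<bullet> u \<noteq> 0" using scalar_prod_self_pos[OF u False] by simp
    have "u \<bullet> (B' *\<^sub>v x) = k * (u \<bullet> x) + c * (u \<bullet> x) * (u \<bullet> u)"
      using B'x[OF x] scalar_prod_eigenvector_mult_vec[OF B sym u Bu x] u x B
      by (simp add: scalar_prod_add_distrib[of _ n])
    also have "\<dots> = u \<bullet> x" using uu by (simp add: c_def field_simps)
    finally show ?thesis .
  qed
  have "y = 0\<^sub>v n" if y: "y \<in> carrier_vec n" "B' *\<^sub>v y = 0\<^sub>v n" for y
  proof -
    have "u \<bullet> y = 0" using uB'x[OF y(1)] y u by simp
    thus ?thesis using inj y B'_eq by simp
  qed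
  then obtain Ni where Ni: "Ni \<in> carrier_mat n n" "Ni * B' = 1\<^sub>m n"
    using injective_mat_invertible[OF B'] by blast
  show ?thesis
  proof (rule that[OF frobenius_sq_nonneg])
    fix x assume x: "x \<in> carrier_vec n" "u \<bullet> x = 0"
    have "x = Ni *\<^sub>v (B' *\<^sub>v x)"
      using Ni B' x by (simp add: assoc_mult_mat_vec[symmetric, of _ n n _ n])
    hence "x = Ni *\<^sub>v (B *\<^sub>v x)" using B'_eq[OF x] by simp
    thus "x \<bullet> x \<le> frobenius_sq Ni * ((B *\<^sub>v x) \<bullet> (B *\<^sub>v x))"
      using mult_mat_vec_square_le_frobenius[OF Ni(1), of "B *\<^sub>v x"] B x by simp
  qed
qed

lemma psd_injective_on_complement_coercive:
  fixes B :: "real mat"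
  assumes B: "B \<in> carrier_mat n n" and sym: "transpose_mat B = B"
    and u: "u \<in> carrier_vec n" and Bu: "B *\<^sub>v u = k \<cdot>\<^sub>v u"
    and psd: "\<And>x. x \<in> carrier_vec n \<Longrightarrow> u \<bullet> x = 0 \<Longrightarrow> 0 \<le> x \<bullet> (B *\<^sub>v x)"
    and inj: "\<And>x. x \<in> carrier_vec n \<Longrightarrow> u \<bullet> x = 0 \<Longrightarrow> B *\<^sub>v x = 0\<^sub>v n \<Longrightarrow> x = 0\<^sub>v n"
  obtains \<delta> where "\<delta> > 0"
    and "\<And>x. x \<in> carrier_vec n \<Longrightarrow> u \<bullet> x = 0 \<Longrightarrow> \<delta> * (x \<bullet> x) \<le> x \<bullet> (B *\<^sub>v x)"
proof -
  obtain F where F: "F \<ge> 0"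
    and bound: "\<And>x. x \<in> carrier_vec n \<Longrightarrow> u \<bullet> x = 0 \<Longrightarrow> x \<bullet> x \<le> F * ((B *\<^sub>v x) \<bullet> (B *\<^sub>v x))"
    using injective_on_complement_bounded_below[OF B sym u Bu inj] by blast
  define K where "K = sqrt (frobenius_sq B)"
  have K: "K \<ge> 0" unfolding K_def by (simp add: frobenius_sq_nonneg)
  show ?thesis
  proof (rule that[of "1 / (F * K + 1)"])
    show "1 / (F * K + 1) > 0" using F K by (simp add: add_nonneg_pos)
    fix x assume x: "x \<in> carrier_vec n" "u \<bullet> x = 0"
    have "u \<bullet> (B *\<^sub>v x) = 0" using scalar_prod_eigenvector_mult_vec[OF B sym u Bu x(1)] x by simp
    hence "(B *\<^sub>v x) \<bullet> (B *\<^sub>v x) \<le> K * (x \<bullet> (B *\<^sub>v x))"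
      using psd_on_complement_square_le[OF B sym u psd x] unfolding K_def by blast
    hence "x \<bullet> x \<le> F * K * (x \<bullet> (B *\<^sub>v x))"
      using bound[OF x] mult_left_mono[OF _ F] by (fastforce simp: mult.assoc)
    also have "\<dots> \<le> (F * K + 1) * (x \<bullet> (B *\<^sub>v x))"
      using psd[OF x] by (simp add: distrib_right)
    moreover have "0 < F * K + 1" using F K by (simp add: add_nonneg_pos)
    ultimately show "1 / (F * K + 1) * (x \<bullet> x) \<le> x \<bullet> (B *\<^sub>v x)"
      by (simp add: field_simps)
  qed
qed

lemma rayleigh_lower_bound_not_eigenvalue:
  fixes A :: "real mat"
  assumes A: "A \<in> carrier_mat n n" and sym: "transpose_mat A = A"
    and u: "u \<in> carrier_vec n" and Au: "A *\<^sub>v u = k \<cdot>\<^sub>v u"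
    and lower: "\<And>v. v \<in> carrier_vec n \<Longrightarrow> u \<bullet> v = 0 \<Longrightarrow> m * (v \<bullet> v) \<le> v \<bullet> (A *\<^sub>v v)"
    and no_eigenvector: "\<And>w. w \<in> carrier_vec n \<Longrightarrow> u \<bullet> w = 0 \<Longrightarrow> A *\<^sub>v w = m \<cdot>\<^sub>v w \<Longrightarrow> w = 0\<^sub>v n"
  obtains \<delta> where "\<delta> > 0"
    and "\<And>v. v \<in> carrier_vec n \<Longrightarrow> u \<bullet> v = 0 \<Longrightarrow> (m + \<delta>) * (v \<bullet> v) \<le> v \<bullet> (A *\<^sub>v v)"
proof -
  define B where "B = A - m \<cdot>\<^sub>m 1\<^sub>m n"
  have B: "B \<in> carrier_mat n n" unfolding B_def by (simp add: minus_carrier_mat)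
  have Bx: "B *\<^sub>v x = A *\<^sub>v x - m \<cdot>\<^sub>v x" if x: "x \<in> carrier_vec n" for x
    unfolding B_def using A x
    by (simp add: minus_mult_distrib_mat_vec[of _ n n] smult_mat_mult_vec[of _ n n])
  have sym_B: "transpose_mat B = B"
    unfolding B_def using A sym by (simp add: transpose_minus[of _ n n]) (auto intro!: eq_matI)
  have Bu: "B *\<^sub>v u = (k - m) \<cdot>\<^sub>v u"
    using Bx[OF u] Au u by (auto intro!: eq_vecI simp: algebra_simps)
  have quad_B: "x \<bullet> (B *\<^sub>v x) = x \<bullet> (A *\<^sub>v x) - m * (x \<bullet> x)" if x: "x \<in> carrier_vec n" for x
    using Bx[OF x] x A by (simp add: scalar_prod_minus_distrib[of _ n])
  have psd: "0 \<le> x \<bullet> (B *\<^sub>v x)" if "x \<in> carrier_vec n" "u \<bullet> x = 0" for x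
    using quad_B lower that by simp
  have inj: "x = 0\<^sub>v n" if x: "x \<in> carrier_vec n" "u \<bullet> x = 0" "B *\<^sub>v x = 0\<^sub>v n" for x
  proof -
    have "A *\<^sub>v x - m \<cdot>\<^sub>v x = 0\<^sub>v n" using Bx[OF x(1)] x(3) by simp
    hence "A *\<^sub>v x = m \<cdot>\<^sub>v x" using A x(1) by (auto simp: vec_eq_iff)
    thus ?thesis using no_eigenvector x by blast
  qed
  obtain \<delta> where \<delta>: "\<delta> > 0"
    and coercive: "\<And>x. x \<in> carrier_vec n \<Longrightarrow> u \<bullet> x = 0 \<Longrightarrow> \<delta> * (x \<bullet> x) \<le> x \<bullet> (B *\<^sub>v x)"
    using psd_injective_on_complement_coercive[OF B sym_B u Bu psd inj] by blast
  show ?thesis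
  proof (rule that[OF \<delta>])
    fix v assume v: "v \<in> carrier_vec n" "u \<bullet> v = 0"
    show "(m + \<delta>) * (v \<bullet> v) \<le> v \<bullet> (A *\<^sub>v v)"
      using coercive[OF v] quad_B[OF v(1)] by (simp add: distrib_right)
  qed
qed

text \<open>The infimum \<open>m\<close> of the Rayleigh quotient on the complement of \<open>u\<close> is an eigenvalue there:
  otherwise the previous lemma would yield a larger lower bound.\<close>

lemma rayleigh_min_on_eigenvector_complement:
  fixes A :: "real mat"
  assumes A: "A \<in> carrier_mat n n" and sym: "transpose_mat A = A"
    and u: "u \<in> carrier_vec n" and Au: "A *\<^sub>v u = k \<cdot>\<^sub>v u"
    and v: "v \<in> carrier_vec n" "u \<bullet> v = 0" "v \<noteq> 0\<^sub>v n"
  obtains m w where "w \<in> carrier_vec n" "u \<bullet> w = 0" "w \<noteq> 0\<^sub>v n" "A *\<^sub>v w = m \<cdot>\<^sub>v w"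
    and "\<And>v. v \<in> carrier_vec n \<Longrightarrow> u \<bullet> v = 0 \<Longrightarrow> m * (v \<bullet> v) \<le> v \<bullet> (A *\<^sub>v v)"
proof -
  define Q where "Q = {v \<bullet> (A *\<^sub>v v) | v. v \<in> carrier_vec n \<and> u \<bullet> v = 0 \<and> v \<bullet> v = 1}"
  define m where "m = Inf Q"
  have normalized: "(v \<bullet> (A *\<^sub>v v)) / (v \<bullet> v) \<in> Q"
    if v: "v \<in> carrier_vec n" "u \<bullet> v = 0" "v \<noteq> 0\<^sub>v n" for v
  proof -
    have pos: "v \<bullet> v > 0" by (rule scalar_prod_self_pos[OF v(1,3)])
    define w where "w = (1 / sqrt (v \<bullet> v)) \<cdot>\<^sub>v v"
    have "w \<in> carrier_vec n \<and> u \<bullet> w = 0 \<and> w \<bullet> w = 1 \<and> w \<bullet> (A *\<^sub>v w) = (v \<bullet> (A *\<^sub>v v)) / (v \<bullet> v)"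
      unfolding w_def using u v pos A by (simp add: mult_mat_vec[OF A v(1)])
    thus ?thesis unfolding Q_def by (intro CollectI exI[of _ w]) simp
  qed
  have bdd: "bdd_below Q"
  proof
    fix q assume "q \<in> Q"
    then obtain v where "v \<in> carrier_vec n" "v \<bullet> v = 1" "q = v \<bullet> (A *\<^sub>v v)" unfolding Q_def by auto
    thus "- sqrt (frobenius_sq A) \<le> q" using abs_quadratic_form_le_frobenius[OF A] by force
  qed
  have lower: "m * (v \<bullet> v) \<le> v \<bullet> (A *\<^sub>v v)" if v: "v \<in> carrier_vec n" "u \<bullet> v = 0" for v
  proof (cases "v = 0\<^sub>v n")
    case True
    thus ?thesis using A by (simp add: mult_mat_zero_vec)
  next
    case False
    have "m \<le> (v \<bullet> (A *\<^sub>v v)) / (v \<bullet> v)"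
      unfolding m_def by (rule cInf_lower[OF normalized[OF v False] bdd])
    thus ?thesis using scalar_prod_self_pos[OF v(1) False] by (simp add: field_simps)
  qed
  have "\<exists>w. w \<in> carrier_vec n \<and> u \<bullet> w = 0 \<and> w \<noteq> 0\<^sub>v n \<and> A *\<^sub>v w = m \<cdot>\<^sub>v w"
  proof (rule ccontr)
    assume "\<not> ?thesis"
    then obtain \<delta> where \<delta>: "\<delta> > 0"
      and larger: "\<And>v. v \<in> carrier_vec n \<Longrightarrow> u \<bullet> v = 0 \<Longrightarrow> (m + \<delta>) * (v \<bullet> v) \<le> v \<bullet> (A *\<^sub>v v)"
      using rayleigh_lower_bound_not_eigenvalue[OF A sym u Au lower] by blast
    have "m + \<delta> \<le> Inf Q"
    proof (rule cInf_greatest)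
      show "Q \<noteq> {}" using normalized[OF v] by blast
      fix q assume "q \<in> Q"
      then obtain x where "x \<in> carrier_vec n" "u \<bullet> x = 0" "x \<bullet> x = 1" "q = x \<bullet> (A *\<^sub>v x)"
        unfolding Q_def by auto
      thus "m + \<delta> \<le> q" using larger by force
    qed
    thus False using \<delta> unfolding m_def by simp
  qed
  thus ?thesis using that lower by blast
qed

lemma finite_eigenvalues:
  fixes A :: "real mat"
  assumes A: "A \<in> carrier_mat n n"
  shows "finite {k. eigenvalue A k}"
proof -
  have "char_poly A \<noteq> 0" using degree_monic_char_poly[OF A] by auto
  hence "finite {k. poly (char_poly A) k = 0}" by (rule poly_roots_finite)
  thus ?thesis using eigenvalue_root_char_poly[OF A] by simp
qed

lemma eigenvector_rayleigh:
  fixes A :: "real mat"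
  assumes A: "A \<in> carrier_mat n n" and ev: "eigenvector A v k"
  shows "v \<in> carrier_vec n" "v \<bullet> v > 0" "v \<bullet> (A *\<^sub>v v) = k * (v \<bullet> v)"
proof -
  from ev A have v: "v \<in> carrier_vec n" "v \<noteq> 0\<^sub>v n" "A *\<^sub>v v = k \<cdot>\<^sub>v v"
    unfolding eigenvector_def by auto
  thus "v \<in> carrier_vec n" "v \<bullet> v > 0" "v \<bullet> (A *\<^sub>v v) = k * (v \<bullet> v)"
    using scalar_prod_self_pos by auto
qed

lemma lam_min_symmetric:
  fixes A :: "real mat"
  assumes A: "A \<in> carrier_mat n n" and sym: "transpose_mat A = A" and n: "0 < n"
  shows "eigenvalue A (lam_min A) \<and> (\<forall>v\<in>carrier_vec n. lam_min A * (v \<bullet> v) \<le> v \<bullet> (A *\<^sub>v v))"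
proof -
  have "unit_vec n 0 \<noteq> (0\<^sub>v n :: real vec)"
    using n by (metis index_unit_vec(1) index_zero_vec(1) zero_neq_one)
  hence e: "unit_vec n 0 \<in> carrier_vec n" "0\<^sub>v n \<bullet> unit_vec n 0 = 0" "unit_vec n 0 \<noteq> 0\<^sub>v n"
    by auto
  have "A *\<^sub>v 0\<^sub>v n = 0 \<cdot>\<^sub>v 0\<^sub>v n" using A by (auto simp: mult_mat_zero_vec)
  then obtain m w where w: "w \<in> carrier_vec n" "w \<noteq> 0\<^sub>v n" "A *\<^sub>v w = m \<cdot>\<^sub>v w"
    and lower: "\<And>v. v \<in> carrier_vec n \<Longrightarrow> m * (v \<bullet> v) \<le> v \<bullet> (A *\<^sub>v v)"
  proof (rule rayleigh_min_on_eigenvector_complement[OF A sym zero_carrier_vec _ e])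
    fix m w assume "w \<in> carrier_vec n" "0\<^sub>v n \<bullet> w = 0" "w \<noteq> 0\<^sub>v n" "A *\<^sub>v w = m \<cdot>\<^sub>v w"
      and "\<And>v. v \<in> carrier_vec n \<Longrightarrow> 0\<^sub>v n \<bullet> v = 0 \<Longrightarrow> m * (v \<bullet> v) \<le> v \<bullet> (A *\<^sub>v v)"
    then show thesis by (intro that[of w m]) auto
  qed
  have m: "eigenvalue A m" using w A unfolding eigenvalue_def eigenvector_def by auto
  have "m \<le> k" if "eigenvalue A k" for k
  proof -
    from that obtain x where "eigenvector A x k" unfolding eigenvalue_def by auto
    from eigenvector_rayleigh[OF A this] lower show ?thesis by force
  qed
  hence "lam_min A = m"
    unfolding lam_min_def using m by (intro Min_eqI[OF finite_eigenvalues[OF A]]) auto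
  thus ?thesis using m lower by simp
qed

lemma lam_min_le_rayleigh:
  fixes A :: "real mat"
  assumes "A \<in> carrier_mat n n" "transpose_mat A = A" "0 < n" "v \<in> carrier_vec n"
  shows "lam_min A * (v \<bullet> v) \<le> v \<bullet> (A *\<^sub>v v)"
  using lam_min_symmetric[OF assms(1-3)] assms(4) by blast

lemma eigenvalue_uminus_iff:
  fixes A :: "real mat"
  assumes A: "A \<in> carrier_mat n n"
  shows "eigenvalue (- A) k = eigenvalue A (- k)"
proof -
  have "eigenvector (- A) v k = eigenvector A v (- k)" for v
  proof (cases "v \<in> carrier_vec n")
    case True
    have "(- (A *\<^sub>v v) = k \<cdot>\<^sub>v v) = (A *\<^sub>v v = (- k) \<cdot>\<^sub>v v)"
      using A True by (auto simp: vec_eq_iff)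
    thus ?thesis using A True unfolding eigenvector_def by simp
  qed (use A in \<open>simp add: eigenvector_def\<close>)
  thus ?thesis unfolding eigenvalue_def by simp
qed

lemma lam_max_symmetric:
  fixes A :: "real mat"
  assumes A: "A \<in> carrier_mat n n" and sym: "transpose_mat A = A" and n: "0 < n"
  shows "lam_min A \<le> lam_max A" "v \<in> carrier_vec n \<Longrightarrow> v \<bullet> (A *\<^sub>v v) \<le> lam_max A * (v \<bullet> v)"
proof -
  have A': "- A \<in> carrier_mat n n" and sym': "transpose_mat (- A) = - A"
    using A sym by (auto simp: transpose_uminus)
  have spec: "{k. eigenvalue A k} = uminus ` {k. eigenvalue (- A) k}"
    by (auto simp: eigenvalue_uminus_iff[OF A] image_iff) (metis minus_minus)
  have "eigenvalue (- A) (lam_min (- A))" using lam_min_symmetric[OF A' sym' n] by blast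
  hence lam_max: "lam_max A = - lam_min (- A)"
    unfolding lam_max_def lam_min_def spec using finite_eigenvalues[OF A']
    by (subst minus_Min_eq_Max) auto
  show "lam_min A \<le> lam_max A"
    using lam_min_symmetric[OF A sym n] finite_eigenvalues[OF A] unfolding lam_max_def
    by (auto intro: Max_ge)
  assume v: "v \<in> carrier_vec n"
  have "lam_min (- A) * (v \<bullet> v) \<le> - (v \<bullet> (A *\<^sub>v v))"
    using lam_min_le_rayleigh[OF A' sym' n v] A v by simp
  thus "v \<bullet> (A *\<^sub>v v) \<le> lam_max A * (v \<bullet> v)" unfolding lam_max by simp
qed

section \<open>The spectrum of a real symmetric matrix\<close>

lemma symmetric_char_poly_roots_real:
  fixes A :: "real mat"
  assumes A: "A \<in> carrier_mat n n" and sym: "transpose_mat A = A"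
    and z: "poly (map_poly complex_of_real (char_poly A)) z = 0"
  shows "Im z = 0"
proof -
  define AC where "AC = map_mat complex_of_real A"
  have AC: "AC \<in> carrier_mat n n" unfolding AC_def using A by simp
  have "char_poly AC = map_poly of_real (char_poly A)"
    unfolding AC_def using of_real_hom.char_poly_hom[OF A] by simp
  hence "eigenvalue AC z" using z eigenvalue_root_char_poly[OF AC] by simp
  then obtain v where v: "v \<in> carrier_vec n" "v \<noteq> 0\<^sub>v n" "AC *\<^sub>v v = z \<cdot>\<^sub>v v"
    unfolding eigenvalue_def eigenvector_def using AC by auto
  define s where "s = (\<Sum>i<n. cnj (v $ i) * (AC *\<^sub>v v) $ i)"
  define r where "r = (\<Sum>i<n. (cmod (v $ i))^2)"
  have s_eigen: "s = z * complex_of_real r"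
  proof -
    have "s = z * (\<Sum>i<n. cnj (v $ i) * v $ i)"
      unfolding s_def using v by (simp add: sum_distrib_left ac_simps)
    also have "(\<Sum>i<n. cnj (v $ i) * v $ i) = complex_of_real r"
      unfolding r_def of_real_sum
      by (rule sum.cong[OF refl], subst complex_norm_square, simp add: mult.commute)
    finally show ?thesis .
  qed
  have s_entries: "s = (\<Sum>i<n. \<Sum>j<n. cnj (v $ i) * complex_of_real (A $$ (i, j)) * v $ j)"
    unfolding s_def
  proof (intro sum.cong refl)
    fix i assume i: "i \<in> {..<n}"
    have "(AC *\<^sub>v v) $ i = (\<Sum>j<n. complex_of_real (A $$ (i, j)) * v $ j)"
      using mult_mat_vec_index_sum[OF AC _ v(1), of i] i A unfolding AC_def by simp
    thus "cnj (v $ i) * (AC *\<^sub>v v) $ i = (\<Sum>j<n. cnj (v $ i) * complex_of_real (A $$ (i, j)) * v $ j)"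
      by (simp add: sum_distrib_left mult.assoc)
  qed
  have A_sym: "A $$ (j, i) = A $$ (i, j)" if "i < n" "j < n" for i j
    using sym that A by (metis carrier_matD index_transpose_mat(1))
  have "cnj s = (\<Sum>i<n. \<Sum>j<n. v $ i * complex_of_real (A $$ (i, j)) * cnj (v $ j))"
    unfolding s_entries by simp
  also have "\<dots> = (\<Sum>j<n. \<Sum>i<n. v $ i * complex_of_real (A $$ (i, j)) * cnj (v $ j))"
    by (rule sum.swap)
  also have "\<dots> = s" unfolding s_entries using A_sym by (intro sum.cong refl) (auto simp: ac_simps)
  finally have "Im s = 0" by (metis Reals_cnj_iff complex_is_Real_iff)
  moreover have "r > 0"
  proof -
    have "r \<noteq> 0"
    proof
      assume "r = 0"
      hence "\<forall>i\<in>{..<n}. (cmod (v $ i))^2 = 0" unfolding r_def by (subst (asm) sum_nonneg_eq_0_iff) auto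
      hence "v = 0\<^sub>v n" using v(1) by (intro eq_vecI) auto
      thus False using v(2) by simp
    qed
    thus ?thesis unfolding r_def by (simp add: order_le_neq_trans sum_nonneg)
  qed
  ultimately show ?thesis unfolding s_eigen by simp
qed

lemma real_rooted_poly_splits:
  fixes p :: "real poly"
  assumes monic: "coeff p (degree p) = 1"
    and real_roots: "\<And>z. poly (map_poly complex_of_real p) z = 0 \<Longrightarrow> Im z = 0"
  obtains rs where "p = (\<Prod>r\<leftarrow>rs. [:- r, 1:])" "length rs = degree p"
proof -
  interpret h: map_poly_inj_idom_hom complex_of_real ..
  define pC where "pC = map_poly complex_of_real p"
  have "degree pC = degree p" "coeff pC (degree pC) = 1" unfolding pC_def using monic by simp_all
  then obtain as where pC: "pC = (\<Prod>a\<leftarrow>as. [:- a, 1:])" and len: "length as = degree p"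
    using fundamental_theorem_algebra_factorized[of pC] by auto
  have "Im a = 0" if "a \<in> set as" for a
  proof -
    have "poly (\<Prod>a\<leftarrow>as. [:- a, 1:]) a = 0" using that by (induct as) auto
    thus "Im a = 0" using real_roots pC unfolding pC_def by metis
  qed
  hence "map_poly complex_of_real (\<Prod>r\<leftarrow>map Re as. [:- r, 1:]) = (\<Prod>a\<leftarrow>as. [:- a, 1:])"
  proof (induct as)
    case (Cons a as)
    have linear: "map_poly complex_of_real [:- Re a, 1:] = [:- a, 1:]"
      using Cons.prems by (simp add: complex_eq_iff)
    have "map_poly complex_of_real (\<Prod>r\<leftarrow>map Re (a # as). [:- r, 1:])
       = map_poly complex_of_real [:- Re a, 1:] * map_poly complex_of_real (\<Prod>r\<leftarrow>map Re as. [:- r, 1:])"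
      by (simp only: list.map prod_list.Cons h.hom_mult)
    also have "\<dots> = [:- a, 1:] * (\<Prod>a\<leftarrow>as. [:- a, 1:])"
      using Cons by (simp only: linear) simp
    finally show ?case by simp
  qed simp
  hence "p = (\<Prod>r\<leftarrow>map Re as. [:- r, 1:])"
    using pC unfolding pC_def by (metis h.injectivity)
  thus ?thesis by (rule that) (simp add: len)
qed

lemma order_prod_linear_factors:
  fixes rs :: "real list"
  shows "order k (\<Prod>r\<leftarrow>rs. [:- r, 1:]) = count (mset rs) k"
proof (induct rs)
  case Nil
  thus ?case by (simp add: order_0I)
next
  case (Cons r rs)
  have "(\<Prod>r\<leftarrow>rs. [:- r, 1:]) \<noteq> 0"
    using prod_list_zero_iff[of "map (\<lambda>r. [:- r, 1:]) rs"] by auto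
  hence "[:- r, 1:] * (\<Prod>r\<leftarrow>rs. [:- r, 1:]) \<noteq> 0"
    by (metis mult_eq_0_iff pCons_eq_0_iff one_neq_zero)
  hence "order k (\<Prod>r\<leftarrow>r # rs. [:- r, 1:]) = order k [:- r, 1:] + order k (\<Prod>r\<leftarrow>rs. [:- r, 1:])"
    by (simp only: prod_list.Cons list.map, intro order_mult)
  moreover have "order k [:- r, 1:] = (if k = r then 1 else 0)"
    using order_power_n_n[of r 1] by (auto intro: order_0I)
  ultimately show ?case using Cons by simp
qed

lemma sum_replicate_mset_count: "(\<Sum>k\<in>set_mset M. replicate_mset (count M k) k) = M"
  by (rule multiset_eqI) (simp add: count_sum sum.delta' count_eq_zero_iff)

lemma eig_mset_split_char_poly:
  fixes A :: "real mat"
  assumes "char_poly A = (\<Prod>r\<leftarrow>rs. [:- r, 1:])"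
  shows "eig_mset A = mset rs"
proof -
  have "poly (\<Prod>r\<leftarrow>rs. [:- r, 1:]) k = 0 \<longleftrightarrow> k \<in> set rs" for k
    by (induct rs) auto
  hence "{k. poly (char_poly A) k = 0} = set_mset (mset rs)" unfolding assms by auto
  thus ?thesis unfolding eig_mset_def assms order_prod_linear_factors
    using sum_replicate_mset_count[of "mset rs"] by simp
qed

lemma size_eig_mset_symmetric:
  fixes A :: "real mat"
  assumes A: "A \<in> carrier_mat n n" and sym: "transpose_mat A = A"
  shows "size (eig_mset A) = n"
proof -
  from degree_monic_char_poly[OF A]
  have "degree (char_poly A) = n" "coeff (char_poly A) n = 1" by auto
  then obtain rs where "char_poly A = (\<Prod>r\<leftarrow>rs. [:- r, 1:])" "length rs = n"
    using real_rooted_poly_splits[of "char_poly A"] symmetric_char_poly_roots_real[OF A sym] by metis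
  thus ?thesis using eig_mset_split_char_poly by simp
qed

lemma eigenvalue_in_eig_mset:
  fixes A :: "real mat"
  assumes A: "A \<in> carrier_mat n n" and "eigenvalue A k"
  shows "k \<in># eig_mset A"
proof -
  have root: "poly (char_poly A) k = 0" using assms eigenvalue_root_char_poly[OF A] by simp
  have nz: "char_poly A \<noteq> 0" using degree_monic_char_poly[OF A] by auto
  have "eig_mset A = replicate_mset (order k (char_poly A)) k +
     (\<Sum>k'\<in>{k. poly (char_poly A) k = 0} - {k}. replicate_mset (order k' (char_poly A)) k')"
    unfolding eig_mset_def by (rule sum.remove[OF poly_roots_finite[OF nz]]) (simp add: root)
  moreover have "order k (char_poly A) \<noteq> 0" using root nz order_root by blast
  ultimately show ?thesis by simp
qed

lemma sorted_list_of_multiset_second_le: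
  fixes M :: "real multiset"
  assumes "2 \<le> size M" and "a \<in># M" and "b \<in># M" and "a < b"
  shows "sorted_list_of_multiset M ! 1 \<le> b"
proof -
  define xs where "xs = sorted_list_of_multiset M"
  have len: "length xs = size M" and sorted: "sorted xs" and set: "set xs = set_mset M"
    unfolding xs_def by (metis mset_sorted_list_of_multiset size_mset, simp,
        metis mset_sorted_list_of_multiset set_mset_mset)
  obtain i j where "i < length xs" "xs ! i = a" "j < length xs" "xs ! j = b"
    using assms(2,3) set by (metis in_set_conv_nth)
  moreover have "j \<noteq> 0"
    using calculation sorted_nth_mono[OF sorted, of 0 i] assms(4) by (metis le0 not_le)
  ultimately show ?thesis
    unfolding xs_def[symmetric] using sorted_nth_mono[OF sorted, of 1 j] by simp
qed

lemma eig_desc_second_smallest_le: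
  fixes A :: "real mat"
  assumes A: "A \<in> carrier_mat n n" and sym: "transpose_mat A = A" and n: "2 \<le> n"
    and a: "eigenvalue A a" and b: "eigenvalue A b" and "a < b"
  shows "eig_desc A (n - 1) \<le> b"
proof -
  have size: "size (eig_mset A) = n" by (rule size_eig_mset_symmetric[OF A sym])
  hence "length (sorted_list_of_multiset (eig_mset A)) = n"
    by (metis mset_sorted_list_of_multiset size_mset)
  hence "eig_desc A (n - 1) = sorted_list_of_multiset (eig_mset A) ! 1"
    unfolding eig_desc_def using n by (simp add: rev_nth Suc_diff_Suc)
  also have "\<dots> \<le> b"
    using eigenvalue_in_eig_mset[OF A a] eigenvalue_in_eig_mset[OF A b] \<open>a < b\<close> n size
    by (intro sorted_list_of_multiset_second_le[of _ a]) auto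
  finally show ?thesis .
qed

section \<open>The Laplacian of a connected graph\<close>

definition ones_vec :: "nat \<Rightarrow> real vec" where
  "ones_vec n = vec n (\<lambda>_. 1)"

lemma ones_vec_carrier[simp]: "ones_vec n \<in> carrier_vec n"
  unfolding ones_vec_def by simp

lemma ones_vec_scalar_prod: "y \<in> carrier_vec n \<Longrightarrow> ones_vec n \<bullet> y = (\<Sum>i<n. y $ i)"
  by (simp add: scalar_prod_eq_sum[of _ n] ones_vec_def)

lemma incidence_carrier[simp]: "incidence T es \<in> carrier_mat (length es) T"
  unfolding incidence_def by simp

lemma incidence_dim[simp]: "dim_row (incidence T es) = length es" "dim_col (incidence T es) = T"
  unfolding incidence_def by simp_all

lemma simple_graph_edge: "simple_graph T es \<Longrightarrow> (i, j) \<in> set es \<Longrightarrow> i < T \<and> j < T \<and> i \<noteq> j"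
  unfolding simple_graph_def by auto

lemma incidence_mult_vec:
  assumes sg: "simple_graph T es" and y: "y \<in> carrier_vec T" and k: "k < length es"
  shows "(incidence T es *\<^sub>v y) $ k = y $ fst (es ! k) - y $ snd (es ! k)"
proof -
  obtain a b where ab: "es ! k = (a, b)" by fastforce
  have "(a, b) \<in> set es" using k ab by (metis nth_mem)
  hence a: "a < T" and b: "b < T" and "a \<noteq> b" using simple_graph_edge[OF sg] by auto
  have "row (incidence T es) k = vec T (\<lambda>v. if v = a then 1 else if v = b then -1 else 0)"
    using k ab by (intro eq_vecI) (auto simp: incidence_def)
  hence "(incidence T es *\<^sub>v y) $ k = (\<Sum>v<T. (if v = a then 1 else if v = b then -1 else 0) * y $ v)"
    using k y by (simp add: scalar_prod_eq_sum[OF y])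
  also have "\<dots> = (\<Sum>v<T. (if v = a then y $ v else 0) - (if v = b then y $ v else 0))"
    using \<open>a \<noteq> b\<close> by (intro sum.cong) auto
  also have "\<dots> = y $ a - y $ b" using a b by (simp add: sum_subtractf)
  finally show ?thesis using ab by simp
qed

lemma incidence_mult_ones_vec:
  assumes "simple_graph T es"
  shows "incidence T es *\<^sub>v ones_vec T = 0\<^sub>v (length es)"
proof (rule eq_vecI)
  fix k assume "k < dim_vec (0\<^sub>v (length es) :: real vec)"
  hence k: "k < length es" by simp
  obtain a b where ab: "es ! k = (a, b)" by fastforce
  have "(a, b) \<in> set es" using k ab by (metis nth_mem)
  hence "a < T" "b < T" using simple_graph_edge[OF assms] by auto
  thus "(incidence T es *\<^sub>v ones_vec T) $ k = 0\<^sub>v (length es) $ k"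
    using incidence_mult_vec[OF assms ones_vec_carrier k] k ab by (simp add: ones_vec_def)
qed (simp add: incidence_def)

lemma connected_incidence_kernel_const:
  assumes cg: "connected_graph T es" and y: "y \<in> carrier_vec T"
    and Dy: "incidence T es *\<^sub>v y = 0\<^sub>v (length es)" and u: "u < T"
  shows "y $ u = y $ 0"
proof -
  have sg: "simple_graph T es" using cg unfolding connected_graph_def by simp
  have edge: "y $ i = y $ j" if "(i, j) \<in> set es" for i j
  proof -
    from that obtain k where k: "k < length es" "es ! k = (i, j)" by (metis in_set_conv_nth)
    have "(incidence T es *\<^sub>v y) $ k = 0" using Dy k by simp
    thus ?thesis using incidence_mult_vec[OF sg y k(1)] k by simp
  qed
  have "0 < T" using u by simp
  hence "(0, u) \<in> {(i, j). (i, j) \<in> set es \<or> (j, i) \<in> set es}\<^sup>*"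
    using cg u unfolding connected_graph_def by blast
  thus ?thesis
  proof (induct rule: rtrancl_induct)
    case (step a b)
    hence "y $ a = y $ b" using edge[of a b] edge[of b a] by auto
    thus ?case using step.hyps(3) by simp
  qed simp
qed

lemma connected_incidence_kernel_orthogonal_ones:
  assumes cg: "connected_graph T es" and y: "y \<in> carrier_vec T"
    and Dy: "incidence T es *\<^sub>v y = 0\<^sub>v (length es)" and "ones_vec T \<bullet> y = 0"
  shows "y = 0\<^sub>v T"
proof (cases "T = 0")
  case True
  thus ?thesis using y by auto
next
  case False
  have const: "y $ i = y $ 0" if "i < T" for i
    by (rule connected_incidence_kernel_const[OF cg y Dy that])
  have "ones_vec T \<bullet> y = (\<Sum>i<T. y $ 0)"
    unfolding ones_vec_scalar_prod[OF y] by (intro sum.cong refl const) simp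
  hence y0: "y $ 0 = 0" using \<open>ones_vec T \<bullet> y = 0\<close> False by simp
  show ?thesis
  proof (rule eq_vecI)
    fix i assume "i < dim_vec (0\<^sub>v T :: real vec)"
    thus "y $ i = 0\<^sub>v T $ i" using const[of i] y0 by simp
  qed (use y in simp)
qed

lemma exists_nonzero_orthogonal_ones_vec:
  assumes T: "2 \<le> T"
  obtains v where "v \<in> carrier_vec T" "ones_vec T \<bullet> v = 0" "v \<noteq> 0\<^sub>v T"
proof
  define v where "v = vec T (\<lambda>i. if i = 0 then 1 else if i = 1 then -1 else (0 :: real))"
  show v: "v \<in> carrier_vec T" unfolding v_def by simp
  have "ones_vec T \<bullet> v = (\<Sum>i<T. v $ i)" by (rule ones_vec_scalar_prod[OF v])
  also have "\<dots> = (\<Sum>i<T. (if i = 0 then 1 else 0) - (if i = 1 then 1 else 0))"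
    unfolding v_def by (intro sum.cong) auto
  finally show "ones_vec T \<bullet> v = 0" using T by (simp add: sum_subtractf)
  have "v $ 0 \<noteq> 0\<^sub>v T $ 0" using T unfolding v_def by simp
  thus "v \<noteq> 0\<^sub>v T" by metis
qed

lemma laplacian_eigenvalue_orthogonal_ones_pos:
  assumes cg: "connected_graph T es"
    and w: "w \<in> carrier_vec T" "ones_vec T \<bullet> w = 0" "w \<noteq> 0\<^sub>v T"
    and Lw: "(transpose_mat (incidence T es) * incidence T es) *\<^sub>v w = m \<cdot>\<^sub>v w"
  shows "m > 0"
proof (rule ccontr)
  define D where "D = incidence T es"
  have D: "D \<in> carrier_mat (length es) T" unfolding D_def by simp
  assume "\<not> m > 0"
  moreover have "(D *\<^sub>v w) \<bullet> (D *\<^sub>v w) = m * (w \<bullet> w)"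
    using gram_quadratic_form[OF D w(1)] Lw w(1) unfolding D_def by simp
  ultimately have "(D *\<^sub>v w) \<bullet> (D *\<^sub>v w) \<le> 0"
    using scalar_prod_self_nonneg[of w] by (simp add: mult_nonpos_nonneg)
  hence "(D *\<^sub>v w) \<bullet> (D *\<^sub>v w) = 0" using scalar_prod_self_nonneg[of "D *\<^sub>v w"] by linarith
  hence "D *\<^sub>v w = 0\<^sub>v (length es)"
    using scalar_prod_self_eq_0_iff[of "D *\<^sub>v w" "length es"] D w(1) by simp
  thus False using connected_incidence_kernel_orthogonal_ones[OF cg w(1)] w(2,3) D_def by simp
qed

text \<open>\<open>eig_desc L (T - 1)\<close> is the second smallest eigenvalue of the Laplacian \<open>L\<close>. It is
  bounded by the minimum \<open>m\<close> of the Rayleigh quotient on the complement of the constant vectors,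
  which is an eigenvalue and, by connectivity, positive.\<close>

lemma algebraic_connectivity_le_rayleigh:
  assumes cg: "connected_graph T es" and T: "2 \<le> T"
    and y: "y \<in> carrier_vec T" and y_sum: "(\<Sum>i<T. y $ i) = 0"
  shows "eig_desc (transpose_mat (incidence T es) * incidence T es) (T - 1) * (y \<bullet> y)
     \<le> (incidence T es *\<^sub>v y) \<bullet> (incidence T es *\<^sub>v y)"
proof -
  define D where "D = incidence T es"
  define L where "L = transpose_mat D * D"
  have D: "D \<in> carrier_mat (length es) T" unfolding D_def by simp
  have L: "L \<in> carrier_mat T T" and sym: "transpose_mat L = L"
    unfolding L_def using D by (auto simp: transpose_gram)
  have D1: "D *\<^sub>v ones_vec T = 0\<^sub>v (length es)"
    unfolding D_def using cg by (simp add: connected_graph_def incidence_mult_ones_vec)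
  have L1: "L *\<^sub>v ones_vec T = 0 \<cdot>\<^sub>v ones_vec T"
    unfolding L_def using D D1 by (auto simp: mult_mat_zero_vec ones_vec_def intro!: eq_vecI)
  obtain v where v: "v \<in> carrier_vec T" "ones_vec T \<bullet> v = 0" "v \<noteq> 0\<^sub>v T"
    using exists_nonzero_orthogonal_ones_vec[OF T] by blast
  obtain m w where w: "w \<in> carrier_vec T" "ones_vec T \<bullet> w = 0" "w \<noteq> 0\<^sub>v T" "L *\<^sub>v w = m \<cdot>\<^sub>v w"
    and lower: "\<And>x. x \<in> carrier_vec T \<Longrightarrow> ones_vec T \<bullet> x = 0 \<Longrightarrow> m * (x \<bullet> x) \<le> x \<bullet> (L *\<^sub>v x)"
    using rayleigh_min_on_eigenvector_complement[OF L sym ones_vec_carrier L1 v] by blast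
  have "m > 0"
    using laplacian_eigenvalue_orthogonal_ones_pos[OF cg w(1-3)] w(4) unfolding L_def D_def .
  have "ones_vec T $ 0 \<noteq> 0\<^sub>v T $ 0" using T by (simp add: ones_vec_def)
  hence "eigenvalue L 0"
    unfolding eigenvalue_def eigenvector_def using L L1 by (intro exI[of _ "ones_vec T"]) auto
  moreover have "eigenvalue L m"
    unfolding eigenvalue_def eigenvector_def using L w by (intro exI[of _ w]) auto
  ultimately have "eig_desc L (T - 1) \<le> m"
    using eig_desc_second_smallest_le[OF L sym T] \<open>m > 0\<close> by blast
  moreover have "m * (y \<bullet> y) \<le> (D *\<^sub>v y) \<bullet> (D *\<^sub>v y)"
    using lower[OF y] gram_quadratic_form[OF D y] y_sum ones_vec_scalar_prod[OF y] unfolding L_def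
    by simp
  ultimately show ?thesis
    unfolding L_def D_def[symmetric] using mult_right_mono[OF _ scalar_prod_self_nonneg[of y]]
    by (metis order_trans)
qed

section \<open>Block structure: Kronecker products and block diagonal matrices\<close>

text \<open>A vector in \<open>\<real>\<^sup>n\<^sup>T\<close> consists of \<open>T\<close> blocks of length \<open>n\<close>. The block diagonal
  matrix \<open>blockdiag Cs\<close> acts on the blocks \<open>block_vec n t x\<close>, while \<open>D \<otimes> I\<^sub>n\<close> acts as \<open>D\<close> on
  each coordinate slice \<open>coord_slice n T a x\<close>.\<close>

definition block_vec :: "nat \<Rightarrow> nat \<Rightarrow> real vec \<Rightarrow> real vec" where
  "block_vec n t x = vec n (\<lambda>a. x $ (t * n + a))"

definition coord_slice :: "nat \<Rightarrow> nat \<Rightarrow> nat \<Rightarrow> real vec \<Rightarrow> real vec" where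
  "coord_slice n T a x = vec T (\<lambda>t. x $ (t * n + a))"

lemma block_vec_carrier[simp]: "block_vec n t x \<in> carrier_vec n"
  unfolding block_vec_def by simp

lemma coord_slice_carrier[simp]: "coord_slice n T a x \<in> carrier_vec T"
  unfolding coord_slice_def by simp

lemma dim_block_vec[simp]: "dim_vec (block_vec n t x) = n"
  unfolding block_vec_def by simp

lemma block_index_less:
  fixes t T a n :: nat
  assumes "t < T" "a < n"
  shows "t * n + a < n * T"
proof -
  have "t * n + a < Suc t * n" using assms(2) by simp
  also have "\<dots> \<le> T * n" using assms(1) by (intro mult_right_mono) auto
  finally show ?thesis by (simp add: mult.commute)
qed

lemma sum_lessThan_blocks:
  fixes f :: "nat \<Rightarrow> 'a :: comm_monoid_add" and T n :: nat
  shows "(\<Sum>c<T * n. f c) = (\<Sum>t<T. \<Sum>a<n. f (t * n + a))"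
proof (induct T)
  case (Suc T)
  have "(\<Sum>c<T * n + k. f c) = (\<Sum>c<T * n. f c) + (\<Sum>a<k. f (T * n + a))" for k
    by (induct k) (simp_all add: add.assoc)
  from this[of n] Suc show ?case by (simp add: add.commute)
qed simp

lemma scalar_prod_coord_slices:
  fixes x y :: "real vec"
  assumes "x \<in> carrier_vec (n * T)" "y \<in> carrier_vec (n * T)"
  shows "x \<bullet> y = (\<Sum>a<n. coord_slice n T a x \<bullet> coord_slice n T a y)"
proof -
  have "x \<bullet> y = (\<Sum>c<T * n. x $ c * y $ c)"
    using assms(2) by (simp add: scalar_prod_eq_sum[of _ "n * T"] mult.commute)
  also have "\<dots> = (\<Sum>t<T. \<Sum>a<n. x $ (t * n + a) * y $ (t * n + a))"
    by (rule sum_lessThan_blocks)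
  also have "\<dots> = (\<Sum>a<n. coord_slice n T a x \<bullet> coord_slice n T a y)"
    by (subst sum.swap) (simp add: coord_slice_def scalar_prod_eq_sum[of _ T])
  finally show ?thesis .
qed

lemma kron_one_carrier: "D \<in> carrier_mat r T \<Longrightarrow> kron D (1\<^sub>m n) \<in> carrier_mat (r * n) (T * n)"
  unfolding kron_def by auto

lemma kron_one_mult_vec_index:
  fixes D :: "real mat"
  assumes D: "D \<in> carrier_mat r T" and x: "x \<in> carrier_vec (n * T)" and k: "k < r" and a: "a < n"
  shows "(kron D (1\<^sub>m n) *\<^sub>v x) $ (k * n + a) = (D *\<^sub>v coord_slice n T a x) $ k"
proof -
  have x': "x \<in> carrier_vec (T * n)" using x by (simp add: mult.commute)
  have entry: "kron D (1\<^sub>m n) $$ (k * n + a, t * n + b) = (if b = a then D $$ (k, t) else 0)"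
    if "t < T" "b < n" for t b
    using that k a D block_index_less[OF k a] block_index_less[OF that]
    unfolding kron_def by (auto simp: mult.commute)
  have "k * n + a < r * n" using block_index_less[OF k a] by (simp add: mult.commute)
  hence "(kron D (1\<^sub>m n) *\<^sub>v x) $ (k * n + a)
      = (\<Sum>c<T * n. kron D (1\<^sub>m n) $$ (k * n + a, c) * x $ c)"
    by (rule mult_mat_vec_index_sum[OF kron_one_carrier[OF D] _ x'])
  also have "\<dots> = (\<Sum>t<T. \<Sum>b<n. kron D (1\<^sub>m n) $$ (k * n + a, t * n + b) * x $ (t * n + b))"
    by (rule sum_lessThan_blocks)
  also have "\<dots> = (\<Sum>t<T. \<Sum>b<n. if b = a then D $$ (k, t) * x $ (t * n + a) else 0)"
    by (intro sum.cong refl) (simp add: entry)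
  also have "\<dots> = (\<Sum>t<T. D $$ (k, t) * x $ (t * n + a))"
    using a by simp
  also have "\<dots> = (D *\<^sub>v coord_slice n T a x) $ k"
    using mult_mat_vec_index_sum[OF D k coord_slice_carrier] by (simp add: coord_slice_def)
  finally show ?thesis .
qed

lemma kron_one_norm:
  fixes D :: "real mat"
  assumes D: "D \<in> carrier_mat r T" and x: "x \<in> carrier_vec (n * T)"
  shows "(kron D (1\<^sub>m n) *\<^sub>v x) \<bullet> (kron D (1\<^sub>m n) *\<^sub>v x)
       = (\<Sum>a<n. (D *\<^sub>v coord_slice n T a x) \<bullet> (D *\<^sub>v coord_slice n T a x))"
proof -
  let ?Mx = "kron D (1\<^sub>m n) *\<^sub>v x"
  have "?Mx \<in> carrier_vec (r * n)" using kron_one_carrier[OF D, of n] x by (simp add: mult.commute)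
  hence "?Mx \<bullet> ?Mx = (\<Sum>c<r * n. ?Mx $ c * ?Mx $ c)" by (rule scalar_prod_eq_sum)
  also have "\<dots> = (\<Sum>k<r. \<Sum>a<n. ?Mx $ (k * n + a) * ?Mx $ (k * n + a))"
    by (rule sum_lessThan_blocks)
  also have "\<dots> = (\<Sum>a<n. \<Sum>k<r. (D *\<^sub>v coord_slice n T a x) $ k * (D *\<^sub>v coord_slice n T a x) $ k)"
    using kron_one_mult_vec_index[OF D x] by (subst sum.swap) simp
  also have "\<dots> = (\<Sum>a<n. (D *\<^sub>v coord_slice n T a x) \<bullet> (D *\<^sub>v coord_slice n T a x))"
    using D by (simp add: scalar_prod_eq_sum[of _ r])
  finally show ?thesis .
qed

lemma four_block_diag_mult_vec:
  fixes A B :: "real mat"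
  assumes A: "A \<in> carrier_mat r1 c1" and B: "B \<in> carrier_mat r2 c2"
    and a: "a \<in> carrier_vec c1" and b: "b \<in> carrier_vec c2"
  shows "four_block_mat A (0\<^sub>m r1 c2) (0\<^sub>m r2 c1) B *\<^sub>v (a @\<^sub>v b) = (A *\<^sub>v a) @\<^sub>v (B *\<^sub>v b)"
  using A B a b by (subst four_block_mat_mult_vec[OF A _ _ B a b]) (auto simp: mult_mat_zero_vec)

lemma blockdiag_carrier:
  assumes "\<forall>A\<in>set Cs. dim_col A = n"
  shows "blockdiag Cs \<in> carrier_mat (sum_list (map dim_row Cs)) (n * length Cs)"
  using assms by (induct Cs) (auto simp: Let_def intro!: four_block_carrier_mat)

lemma blockdiag_norm:
  assumes "\<forall>A\<in>set Cs. dim_col A = n" and "v \<in> carrier_vec (n * length Cs)"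
  shows "(blockdiag Cs *\<^sub>v v) \<bullet> (blockdiag Cs *\<^sub>v v)
       = (\<Sum>t<length Cs. (Cs ! t *\<^sub>v block_vec n t v) \<bullet> (Cs ! t *\<^sub>v block_vec n t v))"
  using assms
proof (induct Cs arbitrary: v)
  case Nil
  thus ?case by (simp add: scalar_prod_def)
next
  case (Cons A As)
  define B where "B = blockdiag As"
  define R where "R = sum_list (map dim_row As)"
  define k where "k = length As"
  define r where "r = dim_row A"
  have A: "A \<in> carrier_mat r n" unfolding r_def using Cons.prems by auto
  have B: "B \<in> carrier_mat R (n * k)"
    unfolding B_def R_def k_def using Cons.prems by (intro blockdiag_carrier) auto
  have v: "v \<in> carrier_vec (n + n * k)" using Cons.prems by (simp add: k_def)
  define v1 where "v1 = vec_first v n"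
  define v2 where "v2 = vec_last v (n * k)"
  have v1: "v1 \<in> carrier_vec n" and v2: "v2 \<in> carrier_vec (n * k)" unfolding v1_def v2_def by auto
  have v_split: "v = v1 @\<^sub>v v2" unfolding v1_def v2_def using v by simp
  have first: "block_vec n 0 v = v1"
    unfolding block_vec_def v1_def vec_first_def by simp
  have rest: "block_vec n (Suc t) v = block_vec n t v2" if t: "t < k" for t
  proof (rule eq_vecI)
    fix i assume "i < dim_vec (block_vec n t v2)"
    hence i: "i < n" by simp
    have "t * n + i < n * k" by (rule block_index_less[OF t i])
    thus "block_vec n (Suc t) v $ i = block_vec n t v2 $ i"
      using i v unfolding block_vec_def v2_def vec_last_def by (simp add: algebra_simps)
  qed simp
  have "blockdiag (A # As) = four_block_mat A (0\<^sub>m r (n * k)) (0\<^sub>m R n) B"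
    using carrier_matD[OF A] carrier_matD[OF B] unfolding B_def by (simp add: Let_def)
  hence "blockdiag (A # As) *\<^sub>v v = (A *\<^sub>v v1) @\<^sub>v (B *\<^sub>v v2)"
    unfolding v_split by (rule ssubst) (rule four_block_diag_mult_vec[OF A B v1 v2])
  hence "(blockdiag (A # As) *\<^sub>v v) \<bullet> (blockdiag (A # As) *\<^sub>v v)
      = (A *\<^sub>v v1) \<bullet> (A *\<^sub>v v1) + (B *\<^sub>v v2) \<bullet> (B *\<^sub>v v2)"
    using scalar_prod_append[of "A *\<^sub>v v1" r "B *\<^sub>v v2" R] A B v1 v2 by simp
  also have "(B *\<^sub>v v2) \<bullet> (B *\<^sub>v v2)
      = (\<Sum>t<k. (As ! t *\<^sub>v block_vec n (Suc t) v) \<bullet> (As ! t *\<^sub>v block_vec n (Suc t) v))"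
    using Cons.hyps[OF _ v2[unfolded k_def]] Cons.prems rest unfolding B_def k_def by simp
  also have "(A *\<^sub>v v1) \<bullet> (A *\<^sub>v v1) + \<dots>
      = (\<Sum>t<length (A # As). ((A # As) ! t *\<^sub>v block_vec n t v) \<bullet> ((A # As) ! t *\<^sub>v block_vec n t v))"
    unfolding k_def first[symmetric]
    by (simp only: length_Cons sum.lessThan_Suc_shift nth_Cons_0 nth_Cons_Suc)
  finally show ?case .
qed

definition stacked_gram :: "nat \<Rightarrow> real mat list \<Rightarrow> real mat" where
  "stacked_gram n Cs = foldr (\<lambda>A acc. transpose_mat A * A + acc) Cs (0\<^sub>m n n)"

lemma stacked_gram_carrier:
  "\<forall>A\<in>set Cs. dim_col A = n \<Longrightarrow> stacked_gram n Cs \<in> carrier_mat n n"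
  unfolding stacked_gram_def by (induct Cs) auto

lemma stacked_gram_symmetric:
  assumes "\<forall>A\<in>set Cs. dim_col A = n"
  shows "transpose_mat (stacked_gram n Cs) = stacked_gram n Cs"
  using assms
proof (induct Cs)
  case (Cons A As)
  have G: "transpose_mat A * A \<in> carrier_mat n n" using Cons.prems by auto
  have R: "stacked_gram n As \<in> carrier_mat n n" using Cons.prems by (simp add: stacked_gram_carrier)
  have "stacked_gram n (A # As) = transpose_mat A * A + stacked_gram n As"
    by (simp add: stacked_gram_def)
  thus ?case using transpose_add[OF G R] Cons transpose_gram[of A] by simp
qed (simp add: stacked_gram_def)

lemma stacked_gram_quadratic_form:
  assumes "\<forall>A\<in>set Cs. dim_col A = n" and z: "z \<in> carrier_vec n"
  shows "z \<bullet> (stacked_gram n Cs *\<^sub>v z) = (\<Sum>t<length Cs. (Cs ! t *\<^sub>v z) \<bullet> (Cs ! t *\<^sub>v z))"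
  using assms(1)
proof (induct Cs)
  case Nil
  have "0\<^sub>m n n *\<^sub>v z = 0\<^sub>v n" using z by (intro eq_vecI) auto
  thus ?case using z by (simp add: stacked_gram_def)
next
  case (Cons A As)
  define r where "r = dim_row A"
  have A: "A \<in> carrier_mat r n" unfolding r_def using Cons.prems by auto
  have R: "stacked_gram n As \<in> carrier_mat n n" using Cons.prems by (simp add: stacked_gram_carrier)
  have "z \<bullet> (stacked_gram n (A # As) *\<^sub>v z)
      = z \<bullet> ((transpose_mat A * A) *\<^sub>v z) + z \<bullet> (stacked_gram n As *\<^sub>v z)"
    using A R z by (simp add: stacked_gram_def add_mult_distrib_mat_vec[of _ n n]
        scalar_prod_add_distrib[of _ n])
  also have "\<dots> = (A *\<^sub>v z) \<bullet> (A *\<^sub>v z) + (\<Sum>t<length As. (As ! t *\<^sub>v z) \<bullet> (As ! t *\<^sub>v z))"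
    using Cons gram_quadratic_form[OF A z] by simp
  also have "\<dots> = (\<Sum>t<length (A # As). ((A # As) ! t *\<^sub>v z) \<bullet> ((A # As) ! t *\<^sub>v z))"
    by (simp only: length_Cons sum.lessThan_Suc_shift nth_Cons_0 nth_Cons_Suc)
  finally show ?case .
qed

section \<open>The scalar bound\<close>

text \<open>\<open>l\<close> is the smaller eigenvalue of the symmetric \<open>2 \<times> 2\<close> matrix with diagonal \<open>b\<^sub>2, q\<close> and
  off-diagonal entries \<open>-b\<^sub>3/2\<close>.\<close>

lemma quadratic_form_ge_min_eigenvalue_2x2:
  fixes a c b2 b3 q :: real
  assumes b3: "b3 \<ge> 0"
  defines "l \<equiv> (b2 + q - sqrt ((q - b2)^2 + b3^2)) / 2"
  shows "l * (a^2 + c^2) \<le> b2 * a^2 - b3 * a * c + q * c^2"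
proof -
  define s where "s = sqrt ((q - b2)^2 + b3^2)"
  have s: "s \<ge> 0" "s^2 = (q - b2)^2 + b3^2" unfolding s_def by simp_all
  hence "\<bar>q - b2\<bar> \<le> s" by (metis abs_le_square_iff abs_of_nonneg le_add_same_cancel1 zero_le_power2)
  hence al: "b2 - l \<ge> 0" and be: "q - l \<ge> 0" unfolding l_def s_def[symmetric] by auto
  have "4 * ((b2 - l) * (q - l)) = (2 * (b2 - l)) * (2 * (q - l))" by (simp add: algebra_simps)
  also have "\<dots> = (s - (q - b2)) * (s + (q - b2))"
    unfolding l_def s_def by (simp add: field_simps)
  also have "\<dots> = (b3 / 2)^2 * 4" using s(2) by (simp add: power2_eq_square algebra_simps)
  finally have "sqrt ((b2 - l) * (q - l)) = sqrt ((b3 / 2)^2)" by simp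
  hence "sqrt (b2 - l) * sqrt (q - l) = b3 / 2" using b3 by (simp add: real_sqrt_mult)
  hence "(sqrt (b2 - l) * a - sqrt (q - l) * c)^2 = (b2 - l) * a^2 - b3 * a * c + (q - l) * c^2"
    using al be by (simp add: power2_eq_square algebra_simps)
  also have "\<dots> = (b2 * a^2 - b3 * a * c + q * c^2) - l * (a^2 + c^2)"
    by (simp add: algebra_simps)
  finally show ?thesis using zero_le_power2[of "sqrt (b2 - l) * a - sqrt (q - l) * c"] by linarith
qed

lemma min_eigenvalue_2x2_pos:
  fixes b2 b3 q :: real
  assumes "b2 > 0" "q > 0" "b3^2 < 4 * b2 * q"
  shows "(b2 + q - sqrt ((q - b2)^2 + b3^2)) / 2 > 0"
proof -
  have "(q - b2)^2 + b3^2 < (b2 + q)^2" using assms(3) by (simp add: power2_eq_square algebra_simps)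
  hence "sqrt ((q - b2)^2 + b3^2) < sqrt ((b2 + q)^2)" by (rule real_sqrt_less_mono)
  also have "\<dots> = b2 + q" using assms(1,2) by simp
  finally show ?thesis by simp
qed

text \<open>If \<open>b\<^sub>2 a \<le> b\<^sub>3 c\<close>, the form \<open>q c\<^sup>2\<close> alone dominates; otherwise the second form does,
  by completing the square in \<open>b\<^sub>2 a - b\<^sub>3 c\<close>.\<close>

lemma max_two_forms_lower_bound:
  fixes a c b2 b3 q k X :: real
  assumes a: "a \<ge> 0" and c: "c \<ge> 0" and b2: "b2 > 0" and b3: "b3 > 0" and q: "q > 0"
    and k: "k \<ge> 0" "k * (b2^2 + b3^2) = q * b2^2 / 4" "2 * k \<le> b2"
    and X1: "q * c^2 \<le> X" and X2: "q * c^2 + b2 * a^2 - b3 * a * c \<le> X"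
  shows "k * (a^2 + c^2) \<le> X"
proof (cases "b2 * a \<le> b3 * c")
  case True
  have "(b2 * a)^2 \<le> (b3 * c)^2" using True a b2 by (intro power_mono) auto
  hence "k * (b2^2 * a^2 + b2^2 * c^2) \<le> k * (b3^2 * c^2 + b2^2 * c^2)"
    using k(1) by (intro mult_left_mono) (simp_all add: power_mult_distrib)
  hence "b2^2 * (k * (a^2 + c^2)) \<le> k * (b2^2 + b3^2) * c^2" by (simp add: algebra_simps)
  also have "k * (b2^2 + b3^2) * c^2 = b2^2 * (q * c^2 / 4)" unfolding k(2) by simp
  finally have "b2^2 * (k * (a^2 + c^2)) \<le> b2^2 * (q * c^2 / 4)" .
  hence "k * (a^2 + c^2) \<le> q * c^2 / 4" by (rule mult_left_le_imp_le) (use b2 in simp)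
  also have "\<dots> \<le> q * c^2" using mult_nonneg_nonneg[of q "c^2"] q by simp
  finally show ?thesis using X1 by simp
next
  case False
  define s where "s = b2 * a - b3 * c"
  have s: "s \<ge> 0" unfolding s_def using False by simp
  have "b2^2 * ((b2 - k) * a^2 - b3 * a * c + (q - k) * c^2)
      = (b2 - k) * s^2 + (b2 - 2 * k) * b3 * c * s + (q * b2^2 - k * (b2^2 + b3^2)) * c^2"
    unfolding s_def by (simp add: power2_eq_square algebra_simps)
  also have "\<dots> = (b2 - k) * s^2 + (b2 - 2 * k) * b3 * c * s + (3 / 4 * q * b2^2) * c^2"
    using k(2) by simp
  also have "\<dots> \<ge> 0" using s c b3 k q b2 by (intro add_nonneg_nonneg mult_nonneg_nonneg) auto
  finally have "0 \<le> (b2 - k) * a^2 - b3 * a * c + (q - k) * c^2"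
    using b2 by (simp add: zero_le_mult_iff)
  thus ?thesis using X2 by (simp add: algebra_simps)
qed

lemma lam_bar'_first_branch:
  assumes "b2 > 0" and "\<mu> * b1 < b2 + (b3^2 - b2^2) / (2 * b2)"
  shows "lam_bar' b1 b2 b3 \<mu> = b2^2 / (2 * (b2^2 + b3^2)) * (\<mu> * b1)"
    and "2 * b2 * (\<mu> * b1) < b2^2 + b3^2"
proof -
  show "lam_bar' b1 b2 b3 \<mu> = b2^2 / (2 * (b2^2 + b3^2)) * (\<mu> * b1)"
    using assms(2) unfolding lam_bar'_def by simp
  have "2 * b2 * (b2 + (b3^2 - b2^2) / (2 * b2)) = b2^2 + b3^2"
    using assms(1) by (simp add: field_simps power2_eq_square)
  thus "2 * b2 * (\<mu> * b1) < b2^2 + b3^2" using assms by (metis mult_strict_left_mono zero_less_mult_iff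
        zero_less_numeral)
qed

lemma lam_bar'_second_branch:
  assumes "b2 > 0" and "b3 > 0" and "\<not> \<mu> * b1 < b2 + (b3^2 - b2^2) / (2 * b2)"
  shows "lam_bar' b1 b2 b3 \<mu> = (b2 + \<mu> * b1 - sqrt ((\<mu> * b1 - b2)^2 + b3^2)) / 4"
    and "b2^2 + b3^2 \<le> 2 * b2 * (\<mu> * b1)"
proof -
  define q where "q = \<mu> * b1"
  define s where "s = sqrt (b3^2 + (q - b2)^2)"
  have s: "s > 0" "s^2 = (q - b2)^2 + b3^2"
    unfolding s_def using assms(2) by (simp_all add: add_pos_nonneg)
  have "lam_bar' b1 b2 b3 \<mu> = 1/4 * (1 - (q - b2) / s) * q + b2 / 4 + (b2 * (q - b2) - b3^2) / (4 * s)"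
    using assms(3) unfolding lam_bar'_def q_def s_def by simp
  also have "\<dots> = (s * (q + b2) - ((q - b2)^2 + b3^2)) / (4 * s)"
    using s(1) by (simp add: field_simps power2_eq_square)
  also have "\<dots> = (b2 + q - s) / 4"
    unfolding s(2)[symmetric] using s(1) by (simp add: field_simps power2_eq_square)
  finally show "lam_bar' b1 b2 b3 \<mu> = (b2 + \<mu> * b1 - sqrt ((\<mu> * b1 - b2)^2 + b3^2)) / 4"
    unfolding q_def s_def by (simp add: add.commute)
  have "2 * b2 * (b2 + (b3^2 - b2^2) / (2 * b2)) = b2^2 + b3^2"
    using assms(1) by (simp add: field_simps power2_eq_square)
  thus "b2^2 + b3^2 \<le> 2 * b2 * (\<mu> * b1)" using assms by (metis mult_le_cancel_left_pos not_less
        zero_less_mult_iff zero_less_numeral)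
qed

lemma lam_bar'_pos:
  assumes "b1 > 0" "b2 > 0" "b3 > 0" "\<mu> > 0"
  shows "lam_bar' b1 b2 b3 \<mu> > 0"
proof (cases "\<mu> * b1 < b2 + (b3^2 - b2^2) / (2 * b2)")
  case True
  have "0 < b2^2 / (2 * (b2^2 + b3^2)) * (\<mu> * b1)"
    using assms by (intro mult_pos_pos divide_pos_pos) (auto simp: add_pos_nonneg)
  thus ?thesis using lam_bar'_first_branch(1)[OF assms(2) True] by simp
next
  case False
  have "b3^2 < 4 * b2 * (\<mu> * b1)"
    using lam_bar'_second_branch(2)[OF assms(2,3) False] assms(2) zero_le_power2[of b3]
      zero_less_power[OF assms(2), of 2] by linarith
  thus ?thesis using lam_bar'_second_branch(1)[OF assms(2,3) False]
      min_eigenvalue_2x2_pos[OF assms(2) _, of "\<mu> * b1" b3] assms by simp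
qed

lemma lam_bar'_lower_bound:
  fixes a c X :: real
  assumes b: "b1 > 0" "b2 > 0" "b3 > 0" "\<mu> > 0" and a: "a \<ge> 0" and c: "c \<ge> 0"
    and X1: "\<mu> * b1 * c^2 \<le> X" and X2: "\<mu> * b1 * c^2 + b2 * a^2 - b3 * a * c \<le> X"
  shows "lam_bar' b1 b2 b3 \<mu> / 2 * (a^2 + c^2) \<le> X"
proof (cases "\<mu> * b1 < b2 + (b3^2 - b2^2) / (2 * b2)")
  case True
  note branch = lam_bar'_first_branch[OF b(2) True]
  have q: "\<mu> * b1 > 0" using b by simp
  have denom: "b2^2 + b3^2 > 0" using b(2) by (simp add: add_pos_nonneg)
  show ?thesis
  proof (rule max_two_forms_lower_bound[OF a c b(2,3) q _ _ _ X1 X2])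
    show "0 \<le> lam_bar' b1 b2 b3 \<mu> / 2" using lam_bar'_pos[OF b] by simp
    show "lam_bar' b1 b2 b3 \<mu> / 2 * (b2^2 + b3^2) = \<mu> * b1 * b2^2 / 4"
      unfolding branch(1) using denom by (simp add: field_simps)
    have "2 * (lam_bar' b1 b2 b3 \<mu> / 2) * (b2^2 + b3^2) = b2 * (2 * b2 * (\<mu> * b1)) / 4"
      unfolding branch(1) using denom by (simp add: field_simps power2_eq_square)
    also have "\<dots> \<le> b2 * (b2^2 + b3^2) / 4"
      using branch(2) b(2) by (intro divide_right_mono mult_left_mono) auto
    also have "\<dots> \<le> b2 * (b2^2 + b3^2)" using b(2) denom by simp
    finally show "2 * (lam_bar' b1 b2 b3 \<mu> / 2) \<le> b2" using denom by simp
  qed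
next
  case False
  let ?l = "(b2 + \<mu> * b1 - sqrt ((\<mu> * b1 - b2)^2 + b3^2)) / 2"
  have "lam_bar' b1 b2 b3 \<mu> / 2 \<le> ?l"
    using lam_bar'_second_branch(1)[OF b(2,3) False] lam_bar'_pos[OF b] by simp
  hence "lam_bar' b1 b2 b3 \<mu> / 2 * (a^2 + c^2) \<le> ?l * (a^2 + c^2)"
    by (intro mult_right_mono) simp_all
  also have "\<dots> \<le> b2 * a^2 - b3 * a * c + \<mu> * b1 * c^2"
    using quadratic_form_ge_min_eigenvalue_2x2[of b3 b2 "\<mu> * b1" a c] b(3) by simp
  finally show ?thesis using X2 by simp
qed

section \<open>Coercivity of the regularised Gram matrix\<close>

definition block_mean :: "nat \<Rightarrow> nat \<Rightarrow> real vec \<Rightarrow> real vec" where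
  "block_mean n T y = vec n (\<lambda>a. (\<Sum>t<T. y $ (t * n + a)) / T)"

definition repeat_block :: "nat \<Rightarrow> nat \<Rightarrow> real vec \<Rightarrow> real vec" where
  "repeat_block n T z = vec (n * T) (\<lambda>c. z $ (c mod n))"

lemma block_mean_carrier[simp]: "block_mean n T y \<in> carrier_vec n"
  unfolding block_mean_def by simp

lemma repeat_block_carrier[simp]: "repeat_block n T z \<in> carrier_vec (n * T)"
  unfolding repeat_block_def by simp

lemma block_vec_repeat_block:
  assumes "z \<in> carrier_vec n" "t < T"
  shows "block_vec n t (repeat_block n T z) = z"
  using assms block_index_less[OF assms(2)]
  by (intro eq_vecI) (auto simp: block_vec_def repeat_block_def)

lemma coord_slice_deviation:
  assumes y: "y \<in> carrier_vec (n * T)" and a: "a < n"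
  shows "coord_slice n T a (y - repeat_block n T z) = coord_slice n T a y - (z $ a) \<cdot>\<^sub>v ones_vec T"
  using y a block_index_less[OF _ a, of _ T]
  by (intro eq_vecI) (auto simp: coord_slice_def repeat_block_def ones_vec_def)

lemma coord_slice_repeat_block:
  assumes a: "a < n"
  shows "coord_slice n T a (repeat_block n T z) = (z $ a) \<cdot>\<^sub>v ones_vec T"
  using a block_index_less[OF _ a, of _ T]
  by (intro eq_vecI) (auto simp: coord_slice_def repeat_block_def ones_vec_def)

lemma ones_vec_scalar_prod_self: "ones_vec n \<bullet> ones_vec n = n"
  using ones_vec_scalar_prod[OF ones_vec_carrier, of n] by (simp add: ones_vec_def)

lemma ones_vec_scalar_prod_slice_deviation:
  assumes y: "y \<in> carrier_vec (n * T)" and a: "a < n" and T: "T > 0"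
  shows "ones_vec T \<bullet> coord_slice n T a (y - repeat_block n T (block_mean n T y)) = 0"
proof -
  have "ones_vec T \<bullet> ones_vec T = T" by (rule ones_vec_scalar_prod_self)
  moreover have "ones_vec T \<bullet> coord_slice n T a y = (\<Sum>t<T. y $ (t * n + a))"
    by (simp add: ones_vec_scalar_prod coord_slice_def)
  ultimately show ?thesis
    unfolding coord_slice_deviation[OF y a] using a T
    by (simp add: scalar_prod_minus_distrib[of _ T] block_mean_def)
qed

lemma repeat_block_scalar_prod:
  assumes z: "z \<in> carrier_vec n" and x: "x \<in> carrier_vec (n * T)"
  shows "repeat_block n T z \<bullet> x = (\<Sum>a<n. z $ a * (ones_vec T \<bullet> coord_slice n T a x))"
  unfolding scalar_prod_coord_slices[OF repeat_block_carrier x]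
  by (intro sum.cong refl) (simp add: coord_slice_repeat_block smult_scalar_prod_distrib[of _ T])

lemma block_mean_decomposition:
  assumes y: "y \<in> carrier_vec (n * T)" and T: "T > 0"
  defines "p \<equiv> repeat_block n T (block_mean n T y)"
  shows "y \<bullet> y = p \<bullet> p + (y - p) \<bullet> (y - p)" and "p \<bullet> p = T * (block_mean n T y \<bullet> block_mean n T y)"
proof -
  define w where "w = y - p"
  have p: "p \<in> carrier_vec (n * T)" and w: "w \<in> carrier_vec (n * T)"
    unfolding p_def w_def using y by auto
  have pw: "p \<bullet> w = 0"
    unfolding p_def w_def using y T
    by (simp add: repeat_block_scalar_prod ones_vec_scalar_prod_slice_deviation)
  have wp: "w \<bullet> p = 0" using pw comm_scalar_prod[OF w p] by simp
  have "y = p + w" unfolding w_def using y p by (intro eq_vecI) auto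
  hence "y \<bullet> y = p \<bullet> p + p \<bullet> w + (w \<bullet> p + w \<bullet> w)"
    using p w by (simp add: add_scalar_prod_distrib[of _ "n * T"] scalar_prod_add_distrib[of _ "n * T"])
  thus "y \<bullet> y = p \<bullet> p + (y - p) \<bullet> (y - p)" unfolding w_def[symmetric] pw wp by simp
  show "p \<bullet> p = T * (block_mean n T y \<bullet> block_mean n T y)"
    unfolding p_def repeat_block_scalar_prod[OF block_mean_carrier repeat_block_carrier]
    by (simp add: coord_slice_repeat_block scalar_prod_smult_distrib[of _ T] ones_vec_scalar_prod_self
        scalar_prod_eq_sum[of _ n] sum_distrib_left ac_simps)
qed

lemma kron_incidence_deviation_bound:
  fixes n T :: nat and es :: "(nat \<times> nat) list" and y :: "real vec"
  assumes cg: "connected_graph T es" and T: "2 \<le> T" and y: "y \<in> carrier_vec (n * T)"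
  defines "D \<equiv> incidence T es" and "w \<equiv> y - repeat_block n T (block_mean n T y)"
  shows "eig_desc (transpose_mat D * D) (T - 1) * (w \<bullet> w) \<le> (kron D (1\<^sub>m n) *\<^sub>v y) \<bullet> (kron D (1\<^sub>m n) *\<^sub>v y)"
proof -
  let ?e = "eig_desc (transpose_mat D * D) (T - 1)"
  have D: "D \<in> carrier_mat (length es) T" unfolding D_def by simp
  have D1: "D *\<^sub>v ones_vec T = 0\<^sub>v (length es)"
    unfolding D_def using cg by (simp add: connected_graph_def incidence_mult_ones_vec)
  have slice: "?e * (coord_slice n T a w \<bullet> coord_slice n T a w)
      \<le> (D *\<^sub>v coord_slice n T a y) \<bullet> (D *\<^sub>v coord_slice n T a y)" if a: "a < n" for a
  proof -
    have "D *\<^sub>v coord_slice n T a w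
        = D *\<^sub>v coord_slice n T a y - block_mean n T y $ a \<cdot>\<^sub>v (D *\<^sub>v ones_vec T)"
      unfolding w_def coord_slice_deviation[OF y a]
      by (simp add: mult_minus_distrib_mat_vec[OF D] mult_mat_vec[OF D])
    also have "\<dots> = D *\<^sub>v coord_slice n T a y" unfolding D1 using D by (intro eq_vecI) auto
    moreover have "(\<Sum>t<T. coord_slice n T a w $ t) = 0"
      using ones_vec_scalar_prod_slice_deviation[OF y a] T unfolding w_def
      by (simp add: ones_vec_scalar_prod)
    ultimately show ?thesis
      using algebraic_connectivity_le_rayleigh[OF cg T coord_slice_carrier, of n a w] unfolding D_def
      by simp
  qed
  have "?e * (w \<bullet> w) = (\<Sum>a<n. ?e * (coord_slice n T a w \<bullet> coord_slice n T a w))"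
    unfolding w_def using y by (simp add: scalar_prod_coord_slices[of _ n T] sum_distrib_left)
  also have "\<dots> \<le> (\<Sum>a<n. (D *\<^sub>v coord_slice n T a y) \<bullet> (D *\<^sub>v coord_slice n T a y))"
    by (intro sum_mono slice) simp
  also have "\<dots> = (kron D (1\<^sub>m n) *\<^sub>v y) \<bullet> (kron D (1\<^sub>m n) *\<^sub>v y)"
    by (rule kron_one_norm[OF D y, symmetric])
  finally show ?thesis .
qed

lemma blockdiag_repeat_block_norm:
  assumes dims: "\<forall>A\<in>set Cs. dim_col A = n" and z: "z \<in> carrier_vec n"
  shows "(blockdiag Cs *\<^sub>v repeat_block n (length Cs) z) \<bullet> (blockdiag Cs *\<^sub>v repeat_block n (length Cs) z)
       = z \<bullet> (stacked_gram n Cs *\<^sub>v z)"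
  unfolding blockdiag_norm[OF dims repeat_block_carrier] stacked_gram_quadratic_form[OF dims z]
  using z by (simp add: block_vec_repeat_block)

lemma blockdiag_block_mean_bounds:
  fixes Cs :: "real mat list"
  assumes n: "0 < n" and T: "0 < T" and len: "length Cs = T" and dims: "\<forall>A\<in>set Cs. dim_col A = n"
    and y: "y \<in> carrier_vec (n * T)" and b2: "0 < b2" and hb2: "lam_min (stacked_gram n Cs) / T \<ge> b2"
  defines "p \<equiv> repeat_block n T (block_mean n T y)" and "C \<equiv> blockdiag Cs"
    and "OtO \<equiv> stacked_gram n Cs"
  shows "b2 * (p \<bullet> p) \<le> (C *\<^sub>v p) \<bullet> (C *\<^sub>v p)" and "0 \<le> lam_max OtO"
    and "vnorm (C *\<^sub>v p) \<le> sqrt (lam_max OtO / T) * vnorm p"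
proof -
  define z where "z = block_mean n T y"
  have OtO: "OtO \<in> carrier_mat n n" "transpose_mat OtO = OtO"
    unfolding OtO_def using dims by (simp_all add: stacked_gram_carrier stacked_gram_symmetric)
  have Cp: "(C *\<^sub>v p) \<bullet> (C *\<^sub>v p) = z \<bullet> (OtO *\<^sub>v z)"
    unfolding C_def OtO_def p_def z_def using blockdiag_repeat_block_norm[OF dims] len by simp
  have pp: "p \<bullet> p = T * (z \<bullet> z)"
    unfolding p_def z_def by (rule block_mean_decomposition(2)[OF y T])
  have b2T: "b2 * T \<le> lam_min OtO" using hb2 T unfolding OtO_def by (simp add: field_simps)
  hence "b2 * (p \<bullet> p) \<le> lam_min OtO * (z \<bullet> z)"
    unfolding pp mult.assoc[symmetric] by (rule mult_right_mono) (rule scalar_prod_self_nonneg)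
  also have "\<dots> \<le> (C *\<^sub>v p) \<bullet> (C *\<^sub>v p)"
    unfolding Cp by (rule lam_min_le_rayleigh[OF OtO n]) (simp add: z_def)
  finally show "b2 * (p \<bullet> p) \<le> (C *\<^sub>v p) \<bullet> (C *\<^sub>v p)" .
  have "0 < b2 * T" using b2 T by simp
  thus "0 \<le> lam_max OtO" using lam_max_symmetric(1)[OF OtO n] b2T by linarith
  have "(C *\<^sub>v p) \<bullet> (C *\<^sub>v p) \<le> lam_max OtO * (z \<bullet> z)"
    unfolding Cp by (rule lam_max_symmetric(2)[OF OtO n]) (simp add: z_def)
  thus "vnorm (C *\<^sub>v p) \<le> sqrt (lam_max OtO / T) * vnorm p"
    unfolding vnorm_def pp using T by (simp add: real_sqrt_mult[symmetric] real_sqrt_le_mono)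
qed

lemma blockdiag_mean_deviation_bound:
  fixes Cs :: "real mat list"
  assumes n: "0 < n" and T: "0 < T" and len: "length Cs = T" and dims: "\<forall>A\<in>set Cs. dim_col A = n"
    and y: "y \<in> carrier_vec (n * T)" and b2: "0 < b2"
    and hb2: "lam_min (stacked_gram n Cs) / T \<ge> b2"
    and hb3: "2 * spec_norm (blockdiag Cs) * sqrt (lam_max (stacked_gram n Cs)) / sqrt T \<le> b3"
  defines "p \<equiv> repeat_block n T (block_mean n T y)"
  shows "b2 * (p \<bullet> p) - b3 * vnorm p * vnorm (y - p) \<le> (blockdiag Cs *\<^sub>v y) \<bullet> (blockdiag Cs *\<^sub>v y)"
proof -
  define C where "C = blockdiag Cs"
  define w where "w = y - p"
  note mean = blockdiag_block_mean_bounds[OF n T len dims y b2 hb2, folded p_def C_def]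
  have C: "C \<in> carrier_mat (sum_list (map dim_row Cs)) (n * T)"
    unfolding C_def using blockdiag_carrier[OF dims] len by simp
  have p: "p \<in> carrier_vec (n * T)" and w: "w \<in> carrier_vec (n * T)"
    unfolding p_def w_def using y by auto
  have "2 * \<bar>(C *\<^sub>v p) \<bullet> (C *\<^sub>v w)\<bar> \<le> 2 * (vnorm (C *\<^sub>v p) * vnorm (C *\<^sub>v w))"
    using abs_scalar_prod_le_vnorm[of _ "sum_list (map dim_row Cs)"] C p w by simp
  also have "\<dots> \<le> 2 * ((sqrt (lam_max (stacked_gram n Cs) / T) * vnorm p) * (spec_norm C * vnorm w))"
    using mean(2,3) spec_norm_bound[OF C w] by (intro mult_left_mono mult_mono) (auto simp: vnorm_nonneg)
  also have "\<dots> = (2 * spec_norm C * sqrt (lam_max (stacked_gram n Cs)) / sqrt T) * vnorm p * vnorm w"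
    by (simp add: real_sqrt_divide)
  also have "\<dots> \<le> b3 * vnorm p * vnorm w"
    using hb3 unfolding C_def by (intro mult_right_mono) (auto simp: vnorm_nonneg)
  finally have cross: "2 * \<bar>(C *\<^sub>v p) \<bullet> (C *\<^sub>v w)\<bar> \<le> b3 * vnorm p * vnorm w" .
  have "y = p + w" unfolding w_def using y p by (intro eq_vecI) auto
  hence "C *\<^sub>v y = C *\<^sub>v p + C *\<^sub>v w" using mult_add_distrib_mat_vec[OF C p w] by simp
  moreover have "(C *\<^sub>v w) \<bullet> (C *\<^sub>v p) = (C *\<^sub>v p) \<bullet> (C *\<^sub>v w)"
    by (rule comm_scalar_prod[of _ "sum_list (map dim_row Cs)"]) (use C p w in auto)
  ultimately have "(C *\<^sub>v y) \<bullet> (C *\<^sub>v y)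
      = (C *\<^sub>v p) \<bullet> (C *\<^sub>v p) + 2 * ((C *\<^sub>v p) \<bullet> (C *\<^sub>v w)) + (C *\<^sub>v w) \<bullet> (C *\<^sub>v w)"
    using C p w by (simp add: add_scalar_prod_distrib[of _ "sum_list (map dim_row Cs)"]
        scalar_prod_add_distrib[of _ "sum_list (map dim_row Cs)"])
  thus ?thesis
    using mean(1) cross scalar_prod_self_nonneg[of "C *\<^sub>v w"] unfolding C_def w_def by linarith
qed

lemma lam_bar'_coercive:
  fixes n T :: nat and es :: "(nat \<times> nat) list" and Cs :: "real mat list" and y :: "real vec"
  defines "D \<equiv> incidence T es"
  assumes n: "n \<ge> 1" and T: "T \<ge> 2" and cg: "connected_graph T es"
    and len: "length Cs = T" and dims: "\<forall>A\<in>set Cs. dim_col A = n"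
    and y: "y \<in> carrier_vec (n * T)"
    and b: "b1 > 0" "b2 > 0" "b3 > 0" "\<mu> > 0"
    and hb1: "eig_desc (transpose_mat D * D) (T - 1) \<ge> b1"
    and hb2: "lam_min (stacked_gram n Cs) / T \<ge> b2"
    and hb3: "2 * spec_norm (blockdiag Cs) * sqrt (lam_max (stacked_gram n Cs)) / sqrt T \<le> b3"
  shows "lam_bar' b1 b2 b3 \<mu> / 2 * (y \<bullet> y)
     \<le> \<mu> * ((kron D (1\<^sub>m n) *\<^sub>v y) \<bullet> (kron D (1\<^sub>m n) *\<^sub>v y)) + (blockdiag Cs *\<^sub>v y) \<bullet> (blockdiag Cs *\<^sub>v y)"
proof -
  define p where "p = repeat_block n T (block_mean n T y)"
  define X where "X = \<mu> * ((kron D (1\<^sub>m n) *\<^sub>v y) \<bullet> (kron D (1\<^sub>m n) *\<^sub>v y))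
    + (blockdiag Cs *\<^sub>v y) \<bullet> (blockdiag Cs *\<^sub>v y)"
  have T0: "0 < T" and n0: "0 < n" using n T by auto
  have "eig_desc (transpose_mat D * D) (T - 1) * ((y - p) \<bullet> (y - p))
      \<le> (kron D (1\<^sub>m n) *\<^sub>v y) \<bullet> (kron D (1\<^sub>m n) *\<^sub>v y)"
    unfolding p_def D_def by (rule kron_incidence_deviation_bound[OF cg T y])
  moreover have "b1 * ((y - p) \<bullet> (y - p)) \<le> eig_desc (transpose_mat D * D) (T - 1) * ((y - p) \<bullet> (y - p))"
    by (rule mult_right_mono[OF hb1 scalar_prod_self_nonneg])
  ultimately have "b1 * (vnorm (y - p))^2 \<le> (kron D (1\<^sub>m n) *\<^sub>v y) \<bullet> (kron D (1\<^sub>m n) *\<^sub>v y)"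
    unfolding vnorm_square by linarith
  hence Mw: "\<mu> * b1 * (vnorm (y - p))^2 \<le> \<mu> * ((kron D (1\<^sub>m n) *\<^sub>v y) \<bullet> (kron D (1\<^sub>m n) *\<^sub>v y))"
    using mult_left_mono[OF _ less_imp_le[OF b(4)]] by (simp add: mult.assoc)
  have X1: "\<mu> * b1 * (vnorm (y - p))^2 \<le> X"
    using Mw scalar_prod_self_nonneg[of "blockdiag Cs *\<^sub>v y"] unfolding X_def by linarith
  have X2: "\<mu> * b1 * (vnorm (y - p))^2 + b2 * (vnorm p)^2 - b3 * vnorm p * vnorm (y - p) \<le> X"
    using Mw blockdiag_mean_deviation_bound[OF n0 T0 len dims y b(2) hb2 hb3]
    unfolding X_def p_def vnorm_square by linarith
  have "lam_bar' b1 b2 b3 \<mu> / 2 * ((vnorm p)^2 + (vnorm (y - p))^2) \<le> X"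
    by (rule lam_bar'_lower_bound[OF b vnorm_nonneg vnorm_nonneg X1 X2])
  thus ?thesis
    unfolding X_def vnorm_square p_def block_mean_decomposition(1)[OF y T0] .
qed

lemma regularized_gram_coercive:
  fixes n T :: nat and es :: "(nat \<times> nat) list" and Cs :: "real mat list" and y :: "real vec"
  defines "D \<equiv> incidence T es" and "C \<equiv> blockdiag Cs"
  assumes n: "n \<ge> 1" and T: "T \<ge> 2" and cg: "connected_graph T es"
    and len: "length Cs = T" and dims: "\<forall>A\<in>set Cs. dim_col A = n"
    and y: "y \<in> carrier_vec (n * T)"
    and b: "b1 > 0" "b2 > 0" "b3 > 0" "\<mu> > 0"
    and hb1: "eig_desc (transpose_mat D * D) (T - 1) \<ge> b1"
    and hb2: "lam_min (stacked_gram n Cs) / T \<ge> b2"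
    and hb3: "2 * spec_norm C * sqrt (lam_max (stacked_gram n Cs)) / sqrt T \<le> b3"
  shows "max (lam_bar' b1 b2 b3 \<mu>) (lam_min (transpose_mat C * C)) / 2 * (y \<bullet> y)
     \<le> \<mu> * ((kron D (1\<^sub>m n) *\<^sub>v y) \<bullet> (kron D (1\<^sub>m n) *\<^sub>v y)) + (C *\<^sub>v y) \<bullet> (C *\<^sub>v y)"
proof (cases "lam_bar' b1 b2 b3 \<mu> \<le> lam_min (transpose_mat C * C)")
  case True
  have C: "C \<in> carrier_mat (sum_list (map dim_row Cs)) (n * T)"
    unfolding C_def using blockdiag_carrier[OF dims] len by simp
  have "max (lam_bar' b1 b2 b3 \<mu>) (lam_min (transpose_mat C * C)) / 2 * (y \<bullet> y)
      \<le> lam_min (transpose_mat C * C) * (y \<bullet> y)"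
    using True lam_bar'_pos[OF b] by (intro mult_right_mono) (auto simp: scalar_prod_self_nonneg)
  also have "\<dots> \<le> y \<bullet> ((transpose_mat C * C) *\<^sub>v y)"
    by (rule lam_min_le_rayleigh) (use C y n T in \<open>auto simp: transpose_gram\<close>)
  also have "\<dots> \<le> \<mu> * ((kron D (1\<^sub>m n) *\<^sub>v y) \<bullet> (kron D (1\<^sub>m n) *\<^sub>v y)) + (C *\<^sub>v y) \<bullet> (C *\<^sub>v y)"
    using gram_quadratic_form[OF C y] b(4) scalar_prod_self_nonneg[of "kron D (1\<^sub>m n) *\<^sub>v y"] by simp
  finally show ?thesis .
next
  case False
  thus ?thesis
    using lam_bar'_coercive[OF n T cg len dims y b hb1[unfolded D_def] hb2 hb3[unfolded C_def]]
    unfolding D_def C_def by simp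
qed

section \<open>The regularised solution\<close>

lemma regularized_quadratic_form:
  fixes M C :: "real mat"
  assumes M: "M \<in> carrier_mat r N" and C: "C \<in> carrier_mat s N" and y: "y \<in> carrier_vec N"
  shows "y \<bullet> ((\<mu> \<cdot>\<^sub>m (transpose_mat M * M) + transpose_mat C * C) *\<^sub>v y)
     = \<mu> * ((M *\<^sub>v y) \<bullet> (M *\<^sub>v y)) + (C *\<^sub>v y) \<bullet> (C *\<^sub>v y)"
proof -
  have MM: "transpose_mat M * M \<in> carrier_mat N N" and CC: "transpose_mat C * C \<in> carrier_mat N N"
    using M C by auto
  have "(\<mu> \<cdot>\<^sub>m (transpose_mat M * M) + transpose_mat C * C) *\<^sub>v y
      = \<mu> \<cdot>\<^sub>v ((transpose_mat M * M) *\<^sub>v y) + (transpose_mat C * C) *\<^sub>v y"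
    using MM CC y by (simp add: add_mult_distrib_mat_vec[of _ N N] smult_mat_mult_vec[OF MM y])
  thus ?thesis
    using MM CC y gram_quadratic_form[OF M y] gram_quadratic_form[OF C y]
    by (simp add: scalar_prod_add_distrib[of _ N] del: assoc_mult_mat_vec)
qed

lemma positive_definite_minv:
  fixes P :: "real mat"
  assumes P: "P \<in> carrier_mat n n" and \<kappa>: "\<kappa> > 0"
    and pd: "\<And>y. y \<in> carrier_vec n \<Longrightarrow> \<kappa> * (y \<bullet> y) \<le> y \<bullet> (P *\<^sub>v y)"
  shows "minv P \<in> carrier_mat n n" "P * minv P = 1\<^sub>m n"
proof -
  have "v = 0\<^sub>v n" if v: "v \<in> carrier_vec n" "P *\<^sub>v v = 0\<^sub>v n" for v
  proof -
    have "\<kappa> * (v \<bullet> v) \<le> 0" using pd[OF v(1)] v by simp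
    hence "v \<bullet> v = 0" using \<kappa> scalar_prod_self_nonneg[of v] by (simp add: mult_le_0_iff)
    thus ?thesis using scalar_prod_self_eq_0_iff[OF v(1)] by simp
  qed
  then obtain B where "B \<in> carrier_mat n n" "B * P = 1\<^sub>m n" "P * B = 1\<^sub>m n"
    using injective_mat_invertible[OF P] by blast
  thus "minv P \<in> carrier_mat n n" "P * minv P = 1\<^sub>m n" using minv_right_inverse[OF P] by blast+
qed

lemma sandwich_mult_le_square:
  fixes \<mu> a b q :: real
  assumes \<mu>: "\<mu> > 0" and a: "a \<ge> 0" and b: "b \<ge> 0" and lower: "\<mu> * a^2 \<le> q" and upper: "q \<le> a * b"
  shows "\<mu> * q \<le> b^2"
proof -
  have "\<mu> * a \<le> b"
  proof (cases "a = 0")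
    case False
    hence "a * (\<mu> * a) \<le> a * b" using lower upper by (simp add: power2_eq_square ac_simps)
    thus ?thesis using a False by simp
  qed (use b in simp)
  hence "(\<mu> * a) * b \<le> b * b" using b by (rule mult_right_mono)
  moreover have "\<mu> * q \<le> \<mu> * (a * b)" using upper \<mu> by simp
  ultimately show ?thesis by (simp add: mult.assoc power2_eq_square)
qed

lemma regularized_solution_bound:
  fixes M C :: "real mat" and \<kappa> \<mu> :: real
  assumes M: "M \<in> carrier_mat r N" and C: "C \<in> carrier_mat s N" and x: "x \<in> carrier_vec N"
    and \<mu>: "\<mu> > 0" and \<kappa>: "\<kappa> > 0"
    and coercive: "\<And>y. y \<in> carrier_vec N \<Longrightarrow>
       \<kappa> * (y \<bullet> y) \<le> \<mu> * ((M *\<^sub>v y) \<bullet> (M *\<^sub>v y)) + (C *\<^sub>v y) \<bullet> (C *\<^sub>v y)"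
  shows "\<mu> * \<kappa> * (vnorm (minv (\<mu> \<cdot>\<^sub>m (transpose_mat M * M) + transpose_mat C * C)
           *\<^sub>v ((transpose_mat M * M) *\<^sub>v x)))^2 \<le> (vnorm (M *\<^sub>v x))^2"
proof -
  define P where "P = \<mu> \<cdot>\<^sub>m (transpose_mat M * M) + transpose_mat C * C"
  have P: "P \<in> carrier_mat N N" unfolding P_def using M C by simp
  have quad: "y \<bullet> (P *\<^sub>v y) = \<mu> * ((M *\<^sub>v y) \<bullet> (M *\<^sub>v y)) + (C *\<^sub>v y) \<bullet> (C *\<^sub>v y)"
    if "y \<in> carrier_vec N" for y
    unfolding P_def by (rule regularized_quadratic_form[OF M C that])
  have "\<kappa> * (y \<bullet> y) \<le> y \<bullet> (P *\<^sub>v y)" if "y \<in> carrier_vec N" for y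
    using coercive[OF that] quad[OF that] by simp
  note inverse = positive_definite_minv[OF P \<kappa> this]
  define z where "z = minv P *\<^sub>v ((transpose_mat M * M) *\<^sub>v x)"
  have z: "z \<in> carrier_vec N" unfolding z_def using inverse(1) M x by simp
  have "P *\<^sub>v z = transpose_mat M *\<^sub>v (M *\<^sub>v x)"
    unfolding z_def using inverse P M x by (simp add: assoc_mult_mat_vec[symmetric, of P N N "minv P" N])
  hence "z \<bullet> (P *\<^sub>v z) = (transpose_mat M *\<^sub>v (M *\<^sub>v x)) \<bullet> z"
    using comm_scalar_prod[of z N "transpose_mat M *\<^sub>v (M *\<^sub>v x)"] M x z by simp
  also have "\<dots> = (M *\<^sub>v x) \<bullet> (M *\<^sub>v z)" by (rule transpose_vec_mult_scalar[OF M z]) (use M x in simp)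
  also have "\<dots> \<le> vnorm (M *\<^sub>v z) * vnorm (M *\<^sub>v x)"
    using abs_scalar_prod_le_vnorm[of "M *\<^sub>v x" "dim_row M" "M *\<^sub>v z"] M x z by (simp add: mult.commute)
  finally have upper: "z \<bullet> (P *\<^sub>v z) \<le> vnorm (M *\<^sub>v z) * vnorm (M *\<^sub>v x)" .
  have lower: "\<mu> * (vnorm (M *\<^sub>v z))^2 \<le> z \<bullet> (P *\<^sub>v z)"
    unfolding quad[OF z] vnorm_square using scalar_prod_self_nonneg[of "C *\<^sub>v z"] by simp
  have "\<mu> * (\<kappa> * (z \<bullet> z)) \<le> \<mu> * (z \<bullet> (P *\<^sub>v z))"
    using coercive[OF z] quad[OF z] \<mu> by simp
  also have "\<dots> \<le> (vnorm (M *\<^sub>v x))^2"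
    by (rule sandwich_mult_le_square[OF \<mu> vnorm_nonneg vnorm_nonneg lower upper])
  finally have "\<mu> * \<kappa> * (vnorm z)^2 \<le> (vnorm (M *\<^sub>v x))^2"
    unfolding vnorm_square[of z] by (simp add: mult.assoc)
  thus ?thesis unfolding z_def P_def .
qed

theorem lemma2:
  fixes n T :: nat and es :: "(nat \<times> nat) list" and Cs :: "real mat list"
    and x :: "real vec" and S b1 b2 b3 \<mu> :: real
  defines "D \<equiv> incidence T es"
  defines "L \<equiv> transpose_mat D * D"
  defines "M \<equiv> kron D (1\<^sub>m n)"
  defines "C \<equiv> blockdiag Cs"
  defines "OtO \<equiv> foldr (\<lambda>A acc. transpose_mat A * A + acc) Cs (0\<^sub>m n n)"
  assumes "n \<ge> 1" and "T \<ge> 2"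
    and "connected_graph T es"
    and "length Cs = T" and "\<forall>A\<in>set Cs. dim_col A = n"
    and "lam_min OtO > 0"
    and "x \<in> carrier_vec (n * T)"
    and "(vnorm (M *\<^sub>v x))^2 \<le> S"
    and "b1 > 0" and "b2 > 0" and "b3 > 0"
    and "eig_desc L (T - 1) \<ge> b1"
    and "lam_min OtO / T \<ge> b2"
    and "2 * spec_norm C * sqrt (lam_max OtO) / sqrt T \<le> b3"
    and "\<mu> > 0"
  shows "2 * \<mu>^2 * (vnorm (minv (\<mu> \<cdot>\<^sub>m (transpose_mat M * M) + transpose_mat C * C)
            *\<^sub>v ((transpose_mat M * M) *\<^sub>v x)))^2
         \<le> 4 * \<mu> / max (lam_bar' b1 b2 b3 \<mu>) (lam_min (transpose_mat C * C)) * S"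
proof -
  note hyps = assms(6-)
  define lam where "lam = max (lam_bar' b1 b2 b3 \<mu>) (lam_min (transpose_mat C * C))"
  let ?z = "minv (\<mu> \<cdot>\<^sub>m (transpose_mat M * M) + transpose_mat C * C) *\<^sub>v ((transpose_mat M * M) *\<^sub>v x)"
  have M: "M \<in> carrier_mat (length es * n) (n * T)"
    using kron_one_carrier[OF incidence_carrier[of T es], of n] unfolding M_def D_def
    by (simp add: mult.commute)
  have C: "C \<in> carrier_mat (sum_list (map dim_row Cs)) (n * T)"
    unfolding C_def using blockdiag_carrier[OF hyps(5)] hyps(4) by simp
  have lam: "lam > 0" unfolding lam_def using lam_bar'_pos[OF hyps(9-11,15)] by simp
  have "\<mu> * (lam / 2) * (vnorm ?z)^2 \<le> (vnorm (M *\<^sub>v x))^2"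
  proof (rule regularized_solution_bound[OF M C hyps(7,15)])
    show "lam / 2 > 0" using lam by simp
    show "lam / 2 * (y \<bullet> y) \<le> \<mu> * ((M *\<^sub>v y) \<bullet> (M *\<^sub>v y)) + (C *\<^sub>v y) \<bullet> (C *\<^sub>v y)"
      if "y \<in> carrier_vec (n * T)" for y
      using regularized_gram_coercive[OF hyps(1-5) that hyps(9-11,15) hyps(12)[unfolded L_def D_def]
          hyps(13,14)[unfolded OtO_def C_def stacked_gram_def[symmetric]]]
      unfolding lam_def M_def C_def D_def .
  qed
  also have "\<dots> \<le> S" by (rule hyps(8))
  finally have bound: "\<mu> * (lam / 2) * (vnorm ?z)^2 \<le> S" .
  have "2 * \<mu>^2 * (vnorm ?z)^2 = 4 * \<mu> / lam * (\<mu> * (lam / 2) * (vnorm ?z)^2)"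
    using lam by (simp add: field_simps power2_eq_square)
  also have "\<dots> \<le> 4 * \<mu> / lam * S" using bound lam hyps(15) by (intro mult_left_mono) auto
  finally show ?thesis unfolding lam_def .
qed

end
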